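(* Let $k$ be a positive integer and $T$ a tree that is not a path, such that $T$ has no vertex of degree two and no major vertex of terminal degree zero. Then: $O_{R,k}(T)=\mathcal{B}$ if $|M_4(T)|\ge1$ or $|M_3(T)|\ge2$ (for all $k\ge1$), or if $M_4(T)=\emptyset$, $|M_3(T)|=1$, $|M_2(T)|\ge2$ and $k=1$, or if $M_4(T)=M_3(T)=\emptyset$, $|M_2(T)|\ge4$ and $k=1$; $O_{R,k}(T)=\mathcal{N}$ if $M_4(T)=\emptyset$, $|M_3(T)|=1$, $|M_2(T)|\in\{0,1\}$ and $k=1$, or if $M_4(T)=\emptyset$ and $|M_3(T)|=1$ and $k\ge2$, or if $M_4(T)=M_3(T)=\emptyset$, $|M_2(T)|=3$ and $k=1$; $O_{R,k}(T)=\mathcal{M}$ if $M_4(T)=M_3(T)=\emptyset$, $|M_2(T)|=2$ and $k=1$, or if $M_4(T)=M_3(T)=\emptyset$, $M_2(T)\ne\emptyset$ and $k\ge2$.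
   Context: A major vertex is a vertex of degree at least $3$; a leaf has degree $1$. In a tree $T$, a leaf $\ell$ is a terminal vertex of a major vertex $v$ if $d(\ell,v)<d(\ell,w)$ for every other major vertex $w$. The terminal degree $ter_T(v)$ of a major vertex $v$ is its number of terminal vertices; an exterior major vertex is a major vertex of positive terminal degree. $M(T)$ is the set of exterior major vertices; $M_i(T)=\{w\in M(T):ter_T(w)=i\}$ for $i=1,2,3$, and $M_4(T)=\{w\in M(T):ter_T(w)\ge4\}$. $d$ is the shortest-path distance and $d_k(x,y)=\min\{d(x,y),k+1\}$; a set $S$ is a distance-$k$ resolving set if for all distinct $x,y$ some $z\in S$ has $d_k(x,z)\ne d_k(y,z)$. In the Maker-Breaker distance-$k$ resolving game, Maker and Breaker alternately select a not-yet-chosen vertex; Maker wins if his selected vertices form a distance-$k$ resolving set, Breaker wins otherwise. $O_{R,k}(T)=\mathcal{M}$ if Maker has a winning strategy whether he moves first or second, $\mathcal{B}$ if Breaker has a winning strategy whether she moves first or second, $\mathcal{N}$ if the first player has a winning strategy. *)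

theory Defs
  imports Main
begin

definition simple_graph :: "'a set \<Rightarrow> ('a \<Rightarrow> 'a \<Rightarrow> bool) \<Rightarrow> bool" where
  "simple_graph V E \<longleftrightarrow> finite V \<and> (\<forall>u v. E u v \<longrightarrow> u \<in> V \<and> v \<in> V)
     \<and> (\<forall>u v. E u v \<longrightarrow> E v u) \<and> (\<forall>u. \<not> E u u)"

definition walk :: "'a set \<Rightarrow> ('a \<Rightarrow> 'a \<Rightarrow> bool) \<Rightarrow> 'a list \<Rightarrow> bool" where
  "walk V E p \<longleftrightarrow> p \<noteq> [] \<and> set p \<subseteq> V \<and> (\<forall>i. Suc i < length p \<longrightarrow> E (p ! i) (p ! Suc i))"

definition connected_graph :: "'a set \<Rightarrow> ('a \<Rightarrow> 'a \<Rightarrow> bool) \<Rightarrow> bool" where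
  "connected_graph V E \<longleftrightarrow> V \<noteq> {} \<and>
     (\<forall>u\<in>V. \<forall>v\<in>V. \<exists>p. walk V E p \<and> hd p = u \<and> last p = v)"

definition has_cycle :: "'a set \<Rightarrow> ('a \<Rightarrow> 'a \<Rightarrow> bool) \<Rightarrow> bool" where
  "has_cycle V E \<longleftrightarrow> (\<exists>p. walk V E p \<and> distinct p \<and> length p \<ge> 3 \<and> E (last p) (hd p))"

definition tree :: "'a set \<Rightarrow> ('a \<Rightarrow> 'a \<Rightarrow> bool) \<Rightarrow> bool" where
  "tree V E \<longleftrightarrow> simple_graph V E \<and> connected_graph V E \<and> \<not> has_cycle V E"

definition is_path_graph :: "'a set \<Rightarrow> ('a \<Rightarrow> 'a \<Rightarrow> bool) \<Rightarrow> bool" where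
  "is_path_graph V E \<longleftrightarrow> (\<exists>ps. distinct ps \<and> set ps = V \<and>
     (\<forall>u v. E u v \<longleftrightarrow> (\<exists>i. Suc i < length ps \<and> {u, v} = {ps ! i, ps ! Suc i})))"

definition degree :: "'a set \<Rightarrow> ('a \<Rightarrow> 'a \<Rightarrow> bool) \<Rightarrow> 'a \<Rightarrow> nat" where
  "degree V E v = card {u \<in> V. E v u}"

definition gdist :: "'a set \<Rightarrow> ('a \<Rightarrow> 'a \<Rightarrow> bool) \<Rightarrow> 'a \<Rightarrow> 'a \<Rightarrow> nat" where
  "gdist V E u v = (LEAST n. \<exists>p. walk V E p \<and> hd p = u \<and> last p = v \<and> length p = Suc n)"

definition dist_k :: "'a set \<Rightarrow> ('a \<Rightarrow> 'a \<Rightarrow> bool) \<Rightarrow> nat \<Rightarrow> 'a \<Rightarrow> 'a \<Rightarrow> nat" where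
  "dist_k V E k x y = min (gdist V E x y) (k + 1)"

definition major :: "'a set \<Rightarrow> ('a \<Rightarrow> 'a \<Rightarrow> bool) \<Rightarrow> 'a \<Rightarrow> bool" where
  "major V E v \<longleftrightarrow> v \<in> V \<and> degree V E v \<ge> 3"

definition leaf :: "'a set \<Rightarrow> ('a \<Rightarrow> 'a \<Rightarrow> bool) \<Rightarrow> 'a \<Rightarrow> bool" where
  "leaf V E v \<longleftrightarrow> v \<in> V \<and> degree V E v = 1"

definition terminal_of :: "'a set \<Rightarrow> ('a \<Rightarrow> 'a \<Rightarrow> bool) \<Rightarrow> 'a \<Rightarrow> 'a \<Rightarrow> bool" where
  "terminal_of V E v l \<longleftrightarrow> major V E v \<and> leaf V E l \<and>
     (\<forall>w. major V E w \<and> w \<noteq> v \<longrightarrow> gdist V E l v < gdist V E l w)"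

definition ter :: "'a set \<Rightarrow> ('a \<Rightarrow> 'a \<Rightarrow> bool) \<Rightarrow> 'a \<Rightarrow> nat" where
  "ter V E v = card {l. terminal_of V E v l}"

definition ext_major :: "'a set \<Rightarrow> ('a \<Rightarrow> 'a \<Rightarrow> bool) \<Rightarrow> 'a set" where
  "ext_major V E = {v. major V E v \<and> ter V E v > 0}"

definition M_i :: "'a set \<Rightarrow> ('a \<Rightarrow> 'a \<Rightarrow> bool) \<Rightarrow> nat \<Rightarrow> 'a set" where
  "M_i V E i = {w \<in> ext_major V E. ter V E w = i}"

definition M_ge4 :: "'a set \<Rightarrow> ('a \<Rightarrow> 'a \<Rightarrow> bool) \<Rightarrow> 'a set" where
  "M_ge4 V E = {w \<in> ext_major V E. ter V E w \<ge> 4}"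

definition dist_k_resolving :: "'a set \<Rightarrow> ('a \<Rightarrow> 'a \<Rightarrow> bool) \<Rightarrow> nat \<Rightarrow> 'a set \<Rightarrow> bool" where
  "dist_k_resolving V E k S \<longleftrightarrow>
     (\<forall>x\<in>V. \<forall>y\<in>V. x \<noteq> y \<longrightarrow> (\<exists>z\<in>S. dist_k V E k x z \<noteq> dist_k V E k y z))"

(* Maker-Breaker distance-k resolving game.
   maker_wins V E k Mk Br mturn: from the position where Maker has claimed Mk, Breaker has
   claimed Br, and it is Maker's turn iff mturn, Maker has a winning strategy. *)
inductive maker_wins :: "'a set \<Rightarrow> ('a \<Rightarrow> 'a \<Rightarrow> bool) \<Rightarrow> nat \<Rightarrow> 'a set \<Rightarrow> 'a set \<Rightarrow> bool \<Rightarrow> bool"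
  for V E k where
  finished: "V - (Mk \<union> Br) = {} \<Longrightarrow> dist_k_resolving V E k Mk \<Longrightarrow> maker_wins V E k Mk Br mt"
| maker_move: "v \<in> V - (Mk \<union> Br) \<Longrightarrow> maker_wins V E k (insert v Mk) Br False
     \<Longrightarrow> maker_wins V E k Mk Br True"
| breaker_move: "V - (Mk \<union> Br) \<noteq> {} \<Longrightarrow>
     (\<forall>v \<in> V - (Mk \<union> Br). maker_wins V E k Mk (insert v Br) True)
     \<Longrightarrow> maker_wins V E k Mk Br False"

datatype outcome = Outcome_M | Outcome_B | Outcome_N | Outcome_P

(* The game is finite and determined, so Breaker has a winning strategy iff Maker has none. *)
definition game_outcome :: "'a set \<Rightarrow> ('a \<Rightarrow> 'a \<Rightarrow> bool) \<Rightarrow> nat \<Rightarrow> outcome" where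
  "game_outcome V E k =
     (let mf = maker_wins V E k {} {} True; ms = maker_wins V E k {} {} False in
      if mf \<and> ms then Outcome_M
      else if \<not> mf \<and> \<not> ms then Outcome_B
      else if mf \<and> \<not> ms then Outcome_N
      else Outcome_P)"

end

theory Submission
  imports Defs
begin

text \<open>
  Without vertices of degree two, and with a terminal leaf at every major vertex, every vertex
  is a leaf or a major vertex and every leaf hangs directly from a major vertex. The tree is a
  union of stars, a major vertex together with its pendant leaves, and \<open>ter v\<close> is the number
  of leaves of the star at \<open>v\<close>. For \<open>k \<ge> 2\<close> a set resolves as soon as it meets every star and
  misses at most one leaf of each; for \<open>k = 1\<close> at most one leaf may moreover be left with
  neither itself nor its centre chosen. Conversely, two unchosen leaves of one star are twins,
  and for \<open>k = 1\<close> two unchosen leaves with unchosen centres are at truncated distance 2 from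
  every chosen vertex.

  Maker wins by a pairing strategy: the two leaves of each star with two leaves, the centre and
  leaf of each star with one leaf, plus a few pairs (and possibly a first move) for the star
  with three leaves and the centres of stars with two leaves. Breaker wins by blocking: she keeps
  Maker to at most half of a star with four or more leaves, and to at most one vertex in enough
  members of a family of disjoint triples (leaves of a star with three leaves, or stars with two
  leaves).
\<close>

section \<open>Distances in a connected simple graph\<close>

lemma walk_singleton: "x \<in> V \<Longrightarrow> walk V E [x]"
  by (simp add: walk_def)

lemma walk_Cons:
  assumes "x \<in> V" "walk V E p" "E x (hd p)"
  shows "walk V E (x # p)"
  unfolding walk_def
proof (intro conjI allI impI)
  show "x # p \<noteq> []" by simp
  show "set (x # p) \<subseteq> V" using assms by (auto simp: walk_def)
next
  fix i assume i: "Suc i < length (x # p)"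
  have "p \<noteq> []" using assms(2) by (simp add: walk_def)
  then show "E ((x # p) ! i) ((x # p) ! Suc i)"
    using assms i by (cases i) (auto simp: walk_def hd_conv_nth)
qed

lemma walk_tl:
  assumes "walk V E (x # p)" "p \<noteq> []"
  shows "walk V E p"
proof -
  have "E (p ! i) (p ! Suc i)" if "Suc i < length p" for i
    using assms(1) that unfolding walk_def by (metis Suc_less_eq length_Cons nth_Cons_Suc)
  then show ?thesis using assms unfolding walk_def by auto
qed

lemma walk_hd_edge:
  assumes "walk V E (x # p)" "p \<noteq> []"
  shows "E x (hd p)"
  using assms unfolding walk_def
  by (metis Suc_less_eq hd_conv_nth length_Cons length_greater_0_conv nth_Cons_0 nth_Cons_Suc zero_less_Suc)

lemma walk_rev:
  assumes "walk V E p" "\<And>u v. E u v \<Longrightarrow> E v u"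
  shows "walk V E (rev p)"
  unfolding walk_def
proof (intro conjI allI impI)
  show "rev p \<noteq> []" "set (rev p) \<subseteq> V" using assms by (auto simp: walk_def)
next
  fix i assume i: "Suc i < length (rev p)"
  let ?j = "length p - Suc (Suc i)"
  have "E (p ! ?j) (p ! Suc ?j)" using assms(1) i unfolding walk_def by auto
  moreover have "Suc ?j = length p - Suc i" using i by simp
  ultimately show "E (rev p ! i) (rev p ! Suc i)" using assms(2) i by (simp add: rev_nth)
qed

lemma dist_k_neq_if_gdist_less:
  "gdist V E x z < gdist V E y z \<Longrightarrow> gdist V E x z \<le> k \<Longrightarrow> dist_k V E k x z \<noteq> dist_k V E k y z"
  unfolding dist_k_def by simp

locale connected_simple_graph =
  fixes V :: "'a set" and E :: "'a \<Rightarrow> 'a \<Rightarrow> bool"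
  assumes simple: "simple_graph V E" and connected: "connected_graph V E"
begin

abbreviation d where "d \<equiv> gdist V E"

lemma finite_V: "finite V"
  using simple by (simp add: simple_graph_def)

lemma edge_in_V: "E u v \<Longrightarrow> u \<in> V \<and> v \<in> V"
  using simple by (simp add: simple_graph_def)

lemma edge_sym: "E u v \<Longrightarrow> E v u"
  using simple by (simp add: simple_graph_def)

lemma edge_irrefl: "\<not> E u u"
  using simple by (simp add: simple_graph_def)

lemma shortest_walk_exists:
  assumes "u \<in> V" "v \<in> V"
  obtains p where "walk V E p" "hd p = u" "last p = v" "length p = Suc (d u v)"
proof -
  obtain p where p: "walk V E p" "hd p = u" "last p = v"
    using connected assms unfolding connected_graph_def by blast
  then have "length p = Suc (length p - 1)" by (cases p) (auto simp: walk_def)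
  with p have "\<exists>n p. walk V E p \<and> hd p = u \<and> last p = v \<and> length p = Suc n" by blast
  from LeastI_ex[OF this] show ?thesis using that unfolding gdist_def by blast
qed

lemma gdist_le_walk:
  assumes "walk V E p" "hd p = u" "last p = v" "length p = Suc n"
  shows "d u v \<le> n"
  unfolding gdist_def using assms by (intro Least_le) blast

lemma gdist_self: "u \<in> V \<Longrightarrow> d u u = 0"
  using gdist_le_walk[of "[u]" u u 0] walk_singleton[of u V E] by simp

lemma gdist_eq_0D:
  assumes "u \<in> V" "v \<in> V" "d u v = 0"
  shows "u = v"
proof -
  obtain p where "walk V E p" "hd p = u" "last p = v" "length p = Suc 0"
    using shortest_walk_exists[OF assms(1,2)] assms(3) by auto
  then show ?thesis by (cases p) auto
qed

lemma gdist_pos: "u \<in> V \<Longrightarrow> v \<in> V \<Longrightarrow> u \<noteq> v \<Longrightarrow> d u v \<ge> 1"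
  using gdist_eq_0D by fastforce

lemma gdist_edge:
  assumes "E u v"
  shows "d u v = 1"
proof -
  have uv: "u \<in> V" "v \<in> V" using edge_in_V assms by auto
  have "walk V E [u, v]"
    using walk_Cons[of u V E "[v]"] walk_singleton[of v V E] uv assms by simp
  then have "d u v \<le> 1" using gdist_le_walk[of "[u, v]"] by simp
  moreover have "u \<noteq> v" using edge_irrefl assms by metis
  ultimately show ?thesis using gdist_pos[OF uv] by simp
qed

lemma gdist_eq_1D:
  assumes "u \<in> V" "v \<in> V" "d u v = 1"
  shows "E u v"
proof -
  obtain p where p: "walk V E p" "hd p = u" "last p = v" "length p = Suc (Suc 0)"
    using shortest_walk_exists[OF assms(1,2)] assms(3) by auto
  then obtain a b where "p = [a, b]" by (cases p; cases "tl p") auto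
  then show ?thesis using p walk_hd_edge[of V E a "[b]"] by simp
qed

lemma gdist_ge_2:
  assumes "u \<in> V" "v \<in> V" "u \<noteq> v" "\<not> E u v"
  shows "d u v \<ge> 2"
  using gdist_pos[OF assms(1-3)] gdist_eq_1D[OF assms(1,2)] assms(4) by fastforce

lemma gdist_sym:
  assumes "u \<in> V" "v \<in> V"
  shows "d u v = d v u"
proof -
  have "d x y \<le> d y x" if xy: "x \<in> V" "y \<in> V" for x y
  proof -
    obtain p where p: "walk V E p" "hd p = y" "last p = x" "length p = Suc (d y x)"
      using shortest_walk_exists[OF xy(2,1)] .
    have "walk V E (rev p)" using walk_rev[OF p(1)] edge_sym by blast
    then show ?thesis using p gdist_le_walk[of "rev p" x y "d y x"]
      by (cases p) (auto simp: hd_rev last_rev)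
  qed
  then show ?thesis using assms by (simp add: le_antisym)
qed

lemma is_path_graph_singleton:
  assumes "V = {x}"
  shows "is_path_graph V E"
proof -
  have "\<not> E u w" for u w
    using edge_in_V[of u w] edge_irrefl assms by blast
  then show ?thesis unfolding is_path_graph_def by (intro exI[of _ "[x]"]) (simp add: assms)
qed

lemma is_path_graph_edge:
  assumes "V = {x, y}" "E x y"
  shows "is_path_graph V E"
  unfolding is_path_graph_def
proof (intro exI[of _ "[x, y]"] conjI allI)
  have "x \<noteq> y" using assms(2) edge_irrefl by metis
  then show "distinct [x, y]" by simp
  show "set [x, y] = V" using assms(1) by simp
next
  fix a b
  have "E a b \<longleftrightarrow> {a, b} = {x, y}"
    using assms edge_in_V[of a b] edge_irrefl[of a] edge_sym by (auto simp: doubleton_eq_iff)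
  then show "E a b \<longleftrightarrow> (\<exists>i. Suc i < length [x, y] \<and> {a, b} = {[x, y] ! i, [x, y] ! Suc i})"
    by auto
qed

lemma dist_k_resolvingI:
  assumes "\<And>x y. x \<in> V - S \<Longrightarrow> y \<in> V - S \<Longrightarrow> x \<noteq> y \<Longrightarrow>
    \<exists>z\<in>S. dist_k V E k x z \<noteq> dist_k V E k y z"
  shows "dist_k_resolving V E k S"
  unfolding dist_k_resolving_def
proof (intro ballI impI)
  have self: "dist_k V E k x x \<noteq> dist_k V E k y x" if "x \<in> V" "y \<in> V" "x \<noteq> y" for x y
    using dist_k_neq_if_gdist_less[of V E x x y k] gdist_self[OF that(1)] gdist_pos[OF that(2,1)] that(3)
    by simp
  fix x y assume xy: "x \<in> V" "y \<in> V" "x \<noteq> y"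
  consider "x \<in> S" | "y \<in> S" | "x \<notin> S" "y \<notin> S" by blast
  then show "\<exists>z\<in>S. dist_k V E k x z \<noteq> dist_k V E k y z"
  proof cases
    case 1
    then show ?thesis using self[OF xy] by blast
  next
    case 2
    then show ?thesis using self[of y x] xy by (intro bexI[of _ y]) auto
  next
    case 3
    then show ?thesis using assms xy by blast
  qed
qed

end

section \<open>Stars\<close>

lemma leaf_not_major: "leaf V E x \<Longrightarrow> \<not> major V E x"
  unfolding leaf_def major_def by simp

definition pendant_leaves :: "'a set \<Rightarrow> ('a \<Rightarrow> 'a \<Rightarrow> bool) \<Rightarrow> 'a \<Rightarrow> 'a set" where
  "pendant_leaves V E v = {l. leaf V E l \<and> E v l}"

definition star :: "'a set \<Rightarrow> ('a \<Rightarrow> 'a \<Rightarrow> bool) \<Rightarrow> 'a \<Rightarrow> 'a set" where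
  "star V E v = insert v (pendant_leaves V E v)"

locale pendant_graph = connected_simple_graph +
  assumes not_path: "\<not> is_path_graph V E" and no_degree_2: "\<forall>v\<in>V. degree V E v \<noteq> 2"
begin

lemma exists_other_vertex:
  assumes "x \<in> V"
  shows "\<exists>y\<in>V. y \<noteq> x"
proof (rule ccontr)
  assume "\<not> ?thesis"
  then have "V \<subseteq> {x}" by blast
  then have "V = {x}" using assms by blast
  then show False using is_path_graph_singleton not_path by blast
qed

lemma exists_neighbour:
  assumes "x \<in> V"
  obtains y where "E x y"
proof -
  obtain y where y: "y \<in> V" "y \<noteq> x" using exists_other_vertex assms by blast
  obtain p where p: "walk V E p" "hd p = x" "last p = y"
    using shortest_walk_exists[OF assms y(1)] by blast
  have "p \<noteq> []" using p(1) by (simp add: walk_def)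
  then obtain q where pq: "p = x # q" using p(2) by (cases p) auto
  then have "q \<noteq> []" using p(3) y(2) by auto
  then have "E x (hd q)" using walk_hd_edge[of V E x q] p(1) pq by simp
  then show ?thesis by (rule that)
qed

lemma leaf_or_major:
  assumes "x \<in> V"
  shows "leaf V E x \<or> major V E x"
proof -
  obtain y where "E x y" using exists_neighbour assms by blast
  then have "{u \<in> V. E x u} \<noteq> {}" using edge_in_V[of x y] by blast
  moreover have "finite {u \<in> V. E x u}" using finite_V by simp
  ultimately have "degree V E x \<noteq> 0" unfolding degree_def by simp
  then show ?thesis using no_degree_2 assms unfolding leaf_def major_def by fastforce
qed

lemma leaf_neighbour_unique:
  assumes "leaf V E l" "E l v" "E l w"
  shows "v = w"
proof -
  have "card {u \<in> V. E l u} = 1" using assms(1) by (simp add: leaf_def degree_def)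
  then obtain a where a: "{u \<in> V. E l u} = {a}" by (rule card_1_singletonE)
  have "v \<in> {u \<in> V. E l u}" "w \<in> {u \<in> V. E l u}"
    using assms(2,3) edge_in_V[of l v] edge_in_V[of l w] by simp_all
  then show ?thesis using a by simp
qed

lemma adjacent_leaves_span_V:
  assumes l: "leaf V E l" and v: "leaf V E v" and lv: "E l v"
  shows "V = {l, v}"
proof
  have lV: "l \<in> V" and vV: "v \<in> V" using edge_in_V[OF lv] by auto
  show "{l, v} \<subseteq> V" using lV vV by simp
  have closed: "u \<in> {l, v}" if "a \<in> {l, v}" "E a u" for a u
    using that leaf_neighbour_unique[OF l lv] leaf_neighbour_unique[OF v edge_sym[OF lv]] by blast
  show "V \<subseteq> {l, v}"
  proof
    fix y assume yV: "y \<in> V"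
    obtain p where p: "walk V E p" "hd p = l" "last p = y"
      using shortest_walk_exists[OF lV yV] by blast
    have "p ! i \<in> {l, v}" if "i < length p" for i
      using that
    proof (induction i)
      case 0 then show ?case using p(2) by (cases p) auto
    next
      case (Suc i)
      then show ?case using closed p(1) by (simp add: walk_def)
    qed
    then have "set p \<subseteq> {l, v}" unfolding subset_iff in_set_conv_nth by blast
    moreover have "p \<noteq> []" using p by (simp add: walk_def)
    ultimately show "y \<in> {l, v}" using p(3) last_in_set by blast
  qed
qed

lemma leaf_neighbour_major:
  assumes l: "leaf V E l" and lv: "E l v"
  shows "major V E v"
proof -
  have "\<not> leaf V E v"
    using adjacent_leaves_span_V[OF l _ lv] is_path_graph_edge[OF _ lv] not_path by blast
  then show ?thesis using leaf_or_major edge_in_V[OF lv] by blast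
qed

lemma pendant_leavesD:
  assumes "l \<in> pendant_leaves V E v"
  shows "leaf V E l" "E v l" "E l v"
  using assms edge_sym[of v l] unfolding pendant_leaves_def by auto

lemma pendant_leaves_subset_V: "pendant_leaves V E v \<subseteq> V"
  using edge_in_V unfolding pendant_leaves_def by fast

lemma finite_pendant_leaves: "finite (pendant_leaves V E v)"
  using finite_subset[OF pendant_leaves_subset_V finite_V] .

lemma star_subset_V: "major V E v \<Longrightarrow> star V E v \<subseteq> V"
  using pendant_leaves_subset_V unfolding star_def major_def by blast

lemma pendant_leaves_disjoint:
  assumes "l \<in> pendant_leaves V E v" "l \<in> pendant_leaves V E w"
  shows "v = w"
  using leaf_neighbour_unique pendant_leavesD(1,3)[OF assms(1)] pendant_leavesD(3)[OF assms(2)] .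

lemma major_notin_pendant_leaves:
  assumes "major V E w"
  shows "w \<notin> pendant_leaves V E v"
proof
  assume "w \<in> pendant_leaves V E v"
  then have "leaf V E w" by (rule pendant_leavesD(1))
  with leaf_not_major[of V E w] assms show False by simp
qed

lemma card_star: "major V E v \<Longrightarrow> card (star V E v) = Suc (card (pendant_leaves V E v))"
  unfolding star_def using major_notin_pendant_leaves[of v v] finite_pendant_leaves by simp

lemma stars_disjoint:
  "major V E v \<Longrightarrow> major V E w \<Longrightarrow> v \<noteq> w \<Longrightarrow> star V E v \<inter> star V E w = {}"
  using pendant_leaves_disjoint major_notin_pendant_leaves unfolding star_def by blast

lemma leaf_in_pendant_leaves:
  assumes "leaf V E l"
  obtains v where "major V E v" "l \<in> pendant_leaves V E v"
proof -
  obtain v where "E l v" using exists_neighbour[of l] assms unfolding leaf_def by blast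
  then show ?thesis
    using that leaf_neighbour_major[OF assms] assms edge_sym[of l v] unfolding pendant_leaves_def by blast
qed

lemma vertex_in_star:
  assumes "x \<in> V"
  obtains u where "major V E u" "x \<in> star V E u"
  using leaf_or_major[OF assms] leaf_in_pendant_leaves unfolding star_def by blast

lemma ter_eq_card_pendant_leaves:
  assumes "major V E v"
  shows "ter V E v = card (pendant_leaves V E v)"
proof -
  have "terminal_of V E v l \<longleftrightarrow> l \<in> pendant_leaves V E v" for l
  proof
    assume t: "terminal_of V E v l"
    then have l: "leaf V E l" and closer: "\<And>w. major V E w \<Longrightarrow> w \<noteq> v \<Longrightarrow> d l v < d l w"
      unfolding terminal_of_def by auto
    obtain u where u: "major V E u" "l \<in> pendant_leaves V E u" using leaf_in_pendant_leaves[OF l] .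
    have "d l u = 1" using gdist_edge[OF pendant_leavesD(3)[OF u(2)]] .
    have "u = v"
    proof (rule ccontr)
      assume "u \<noteq> v"
      then have "d l v = 0" using closer[OF u(1)] \<open>d l u = 1\<close> by simp
      then have "l = v" using gdist_eq_0D l assms unfolding leaf_def major_def by blast
      then show False using leaf_not_major[of V E l] l assms by simp
    qed
    then show "l \<in> pendant_leaves V E v" using u by simp
  next
    assume l: "l \<in> pendant_leaves V E v"
    have "d l v < d l w" if w: "major V E w" "w \<noteq> v" for w
    proof -
      have "\<not> E l w" using leaf_neighbour_unique[OF pendant_leavesD(1,3)[OF l]] w(2) by blast
      then have "d l w \<ge> 2"
        using gdist_ge_2 w major_notin_pendant_leaves[OF w(1)] l pendant_leaves_subset_V
        unfolding major_def by blast
      then show ?thesis using gdist_edge[OF pendant_leavesD(3)[OF l]] by simp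
    qed
    then show "terminal_of V E v l"
      unfolding terminal_of_def using assms pendant_leavesD(1)[OF l] by blast
  qed
  then have "{l. terminal_of V E v l} = pendant_leaves V E v" by blast
  then show ?thesis unfolding ter_def by simp
qed

lemma gdist_from_leaf:
  assumes l: "leaf V E l" and lv: "E l v" and z: "z \<in> V" "z \<noteq> l"
  shows "d l z = Suc (d v z)"
proof (rule antisym)
  have vV: "v \<in> V" and lV: "l \<in> V" using edge_in_V[OF lv] by auto
  obtain p where p: "walk V E p" "hd p = v" "last p = z" "length p = Suc (d v z)"
    using shortest_walk_exists[OF vV z(1)] .
  have "walk V E (l # p)" using walk_Cons[OF lV p(1)] p(2) lv by simp
  then show "d l z \<le> Suc (d v z)" using gdist_le_walk[of "l # p" l z] p by (cases p) auto
  obtain q where q: "walk V E q" "hd q = l" "last q = z" "length q = Suc (d l z)"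
    using shortest_walk_exists[OF lV z(1)] .
  have "q \<noteq> []" using q(1) by (simp add: walk_def)
  then obtain r where qr: "q = l # r" using q(2) by (cases q) auto
  then have "r \<noteq> []" using q(3) z(2) by auto
  have "E l (hd r)" using walk_hd_edge[of V E l r] q(1) qr \<open>r \<noteq> []\<close> by simp
  then have "hd r = v" using leaf_neighbour_unique[OF l _ lv] by blast
  have "walk V E r" using walk_tl[of V E l r] q(1) qr \<open>r \<noteq> []\<close> by simp
  moreover note \<open>hd r = v\<close>
  moreover have "last r = z" using q(3) qr \<open>r \<noteq> []\<close> by simp
  moreover have "length r = Suc (length r - 1)" using \<open>r \<noteq> []\<close> by simp
  ultimately have "d v z \<le> length r - 1" by (rule gdist_le_walk)
  then show "Suc (d v z) \<le> d l z" using q(4) qr \<open>r \<noteq> []\<close> by (cases r) auto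
qed

lemma gdist_from_star:
  assumes "major V E u" "a \<in> star V E u" "z \<in> V" "a = u \<or> z \<noteq> a"
  shows "d a z = of_bool (a \<noteq> u) + d u z"
proof (cases "a = u")
  case False
  then have a: "a \<in> pendant_leaves V E u" using assms(2) unfolding star_def by blast
  show ?thesis
    using gdist_from_leaf[OF pendant_leavesD(1,3)[OF a] assms(3)] assms(4) False by simp
qed simp

lemma gdist_between_stars:
  assumes u: "major V E u" "a \<in> star V E u" and w: "major V E w" "b \<in> star V E w" and "a \<noteq> b"
  shows "d a b = of_bool (a \<noteq> u) + d u w + of_bool (b \<noteq> w)"
proof -
  have V: "a \<in> V" "b \<in> V" "u \<in> V" using star_subset_V u w by (auto simp: major_def)
  have "d u b = d b u" using gdist_sym V by simp
  also have "\<dots> = of_bool (b \<noteq> w) + d w u"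
  proof (rule gdist_from_star[OF w V(3)])
    show "b = w \<or> u \<noteq> b" using w(2) major_notin_pendant_leaves[OF u(1)] unfolding star_def by blast
  qed
  also have "d w u = d u w" using gdist_sym V(3) w(1) by (simp add: major_def)
  finally show ?thesis using gdist_from_star[OF u V(2)] assms(5) by simp
qed

end

section \<open>Resolving sets\<close>

definition star_cover :: "'a set \<Rightarrow> ('a \<Rightarrow> 'a \<Rightarrow> bool) \<Rightarrow> 'a set \<Rightarrow> bool" where
  "star_cover V E S \<longleftrightarrow> (\<forall>v. major V E v \<longrightarrow>
     card (pendant_leaves V E v - S) \<le> 1 \<and> star V E v \<inter> S \<noteq> {})"

context pendant_graph
begin

lemma star_cover_twins:
  assumes "star_cover V E S" "major V E v" "x \<in> pendant_leaves V E v" "y \<in> pendant_leaves V E v"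
    "x \<notin> S" "y \<notin> S"
  shows "x = y"
proof -
  have "finite (pendant_leaves V E v - S)" using finite_pendant_leaves by simp
  with card_le_Suc0_iff_eq[OF this] show ?thesis using assms unfolding star_cover_def by auto
qed

lemma separated_from_star:
  assumes k: "2 \<le> k" and u: "major V E u" "x \<in> star V E u" and w: "major V E w" "y \<in> star V E w"
    and s: "s \<in> star V E u" "s \<noteq> x" "s \<noteq> y"
    and closer: "of_bool (x \<noteq> u) < of_bool (y \<noteq> w) + d u w"
  shows "dist_k V E k x s \<noteq> dist_k V E k y s"
proof (rule dist_k_neq_if_gdist_less)
  have uV: "u \<in> V" "w \<in> V" using u w by (auto simp: major_def)
  have "d x s = of_bool (x \<noteq> u) + of_bool (s \<noteq> u)"
    using gdist_between_stars[OF u u(1) s(1)] s(2) gdist_self[OF uV(1)] by simp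
  moreover have "d y s = of_bool (y \<noteq> w) + d u w + of_bool (s \<noteq> u)"
    using gdist_between_stars[OF w u(1) s(1)] s(3) gdist_sym[OF uV] by simp
  ultimately show "d x s < d y s" "d x s \<le> k" using closer k by simp_all
qed

lemma resolving_if_star_cover:
  assumes k: "2 \<le> k" and cover: "star_cover V E S"
  shows "dist_k_resolving V E k S"
proof (rule dist_k_resolvingI)
  fix x y assume x: "x \<in> V - S" and y: "y \<in> V - S" and "x \<noteq> y"
  obtain u where u: "major V E u" "x \<in> star V E u" using vertex_in_star x by blast
  obtain w where w: "major V E w" "y \<in> star V E w" using vertex_in_star y by blast
  obtain s where s: "s \<in> S" "s \<in> star V E u" using cover u(1) unfolding star_cover_def by blast
  obtain s' where s': "s' \<in> S" "s' \<in> star V E w" using cover w(1) unfolding star_cover_def by blast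
  have "of_bool (x \<noteq> u) < of_bool (y \<noteq> w) + d u w \<or> of_bool (y \<noteq> w) < of_bool (x \<noteq> u) + d w u"
  proof (cases "u = w")
    case True
    have "\<not> (x \<noteq> u \<and> y \<noteq> u)"
      using star_cover_twins[OF cover u(1)] u(2) w(2) x y True \<open>x \<noteq> y\<close> unfolding star_def by blast
    then show ?thesis using True \<open>x \<noteq> y\<close> gdist_self u(1) by (auto simp: major_def)
  next
    case False
    then have "d u w \<ge> 1" "d w u \<ge> 1" using gdist_pos u(1) w(1) by (auto simp: major_def)
    then show ?thesis by (cases "x = u") auto
  qed
  then show "\<exists>z\<in>S. dist_k V E k x z \<noteq> dist_k V E k y z"
  proof
    assume "of_bool (x \<noteq> u) < of_bool (y \<noteq> w) + d u w"
    moreover have "s \<noteq> x" "s \<noteq> y" using s(1) x y by auto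
    ultimately show ?thesis using separated_from_star[OF k u w s(2)] s(1) by blast
  next
    assume "of_bool (y \<noteq> w) < of_bool (x \<noteq> u) + d w u"
    moreover have "s' \<noteq> y" "s' \<noteq> x" using s'(1) x y by auto
    ultimately show ?thesis using separated_from_star[OF k w u s'(2)] s'(1) by (metis not_sym)
  qed
qed

lemma star_cover_private_neighbour:
  assumes cover: "star_cover V E S" and x: "major V E x" "x \<notin> S"
  obtains s where "s \<in> S" "E x s" "\<And>y. E y s \<Longrightarrow> y = x"
proof -
  obtain s where s: "s \<in> S" "s \<in> star V E x" using cover x(1) unfolding star_cover_def by blast
  then have "s \<in> pendant_leaves V E x" using x(2) unfolding star_def by blast
  note s_leaf = pendant_leavesD[OF this]
  show ?thesis
  proof (rule that[OF s(1) s_leaf(2)])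
    fix y assume "E y s"
    then show "y = x" using leaf_neighbour_unique[OF s_leaf(1,3) edge_sym] by blast
  qed
qed

lemma adjacency_separates:
  assumes cover: "star_cover V E S"
    and remote: "\<And>x y u w. major V E u \<Longrightarrow> major V E w \<Longrightarrow> x \<in> pendant_leaves V E u \<Longrightarrow>
      y \<in> pendant_leaves V E w \<Longrightarrow> {x, y, u, w} \<inter> S = {} \<Longrightarrow> x = y"
    and x: "x \<in> V - S" and y: "y \<in> V - S" and "x \<noteq> y"
  shows "\<exists>z\<in>S. E x z \<noteq> E y z"
proof (rule ccontr)
  assume "\<not> ?thesis"
  then have same: "E x z \<longleftrightarrow> E y z" if "z \<in> S" for z using that by blast
  have leaf: "leaf V E a" if a: "a = x \<or> a = y" for a
  proof -
    have aVS: "a \<in> V" "a \<notin> S" using a x y by auto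
    have "\<not> major V E a"
    proof
      assume "major V E a"
      then obtain s where s: "s \<in> S" "E a s" and unique: "\<And>b. E b s \<Longrightarrow> b = a"
        using star_cover_private_neighbour[OF cover _ aVS(2)] by blast
      have "E x s" "E y s" using same[OF s(1)] s(2) a by auto
      then show False using unique \<open>x \<noteq> y\<close> by blast
    qed
    then show ?thesis using leaf_or_major[OF aVS(1)] by blast
  qed
  have anchor_outside: "u \<notin> S"
    if u: "major V E u" "a \<in> pendant_leaves V E u" and a: "a = x \<or> a = y" for a u
  proof
    assume "u \<in> S"
    then have "E x u" "E y u" using same pendant_leavesD(3)[OF u(2)] a by blast+
    then have "x \<in> pendant_leaves V E u" "y \<in> pendant_leaves V E u"
      using leaf[of x] leaf[of y] edge_sym[OF \<open>E x u\<close>] edge_sym[OF \<open>E y u\<close>]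
      unfolding pendant_leaves_def by blast+
    then show False using star_cover_twins[OF cover u(1)] x y \<open>x \<noteq> y\<close> by blast
  qed
  obtain u where u: "major V E u" "x \<in> pendant_leaves V E u"
    using leaf_in_pendant_leaves[OF leaf[of x]] by blast
  obtain w where w: "major V E w" "y \<in> pendant_leaves V E w"
    using leaf_in_pendant_leaves[OF leaf[of y]] by blast
  have "{x, y, u, w} \<inter> S = {}"
    using anchor_outside[OF u] anchor_outside[OF w] x y by blast
  then show False using remote[OF u(1) w(1) u(2) w(2)] \<open>x \<noteq> y\<close> by blast
qed

lemma resolving_1_if_star_cover:
  assumes cover: "star_cover V E S"
    and remote: "\<And>x y u w. major V E u \<Longrightarrow> major V E w \<Longrightarrow> x \<in> pendant_leaves V E u \<Longrightarrow>
      y \<in> pendant_leaves V E w \<Longrightarrow> {x, y, u, w} \<inter> S = {} \<Longrightarrow> x = y"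
  shows "dist_k_resolving V E 1 S"
proof (rule dist_k_resolvingI)
  have separated: "dist_k V E 1 a z \<noteq> dist_k V E 1 b z"
    if az: "E a z" and bz: "\<not> E b z" "b \<in> V" "b \<noteq> z" for a b z
  proof (rule dist_k_neq_if_gdist_less)
    have "z \<in> V" using edge_in_V[OF az] by simp
    then show "d a z < d b z" using gdist_edge[OF az] gdist_ge_2[OF bz(2) _ bz(3,1)] by simp
    show "d a z \<le> 1" using gdist_edge[OF az] by simp
  qed
  fix x y assume x: "x \<in> V - S" and y: "y \<in> V - S" and "x \<noteq> y"
  from adjacency_separates[OF cover remote x y \<open>x \<noteq> y\<close>]
  obtain z where z: "z \<in> S" "E x z \<noteq> E y z" ..
  have "z \<noteq> x" "z \<noteq> y" using z(1) x y by auto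
  have "dist_k V E 1 x z \<noteq> dist_k V E 1 y z"
  proof (cases "E x z")
    case True
    then show ?thesis using separated[OF True] z(2) y \<open>z \<noteq> y\<close> by simp
  next
    case False
    then have "dist_k V E 1 y z \<noteq> dist_k V E 1 x z"
      using separated[of y z x] z(2) x \<open>z \<noteq> x\<close> by simp
    then show ?thesis by (rule not_sym)
  qed
  then show "\<exists>z\<in>S. dist_k V E 1 x z \<noteq> dist_k V E 1 y z" using z(1) by blast
qed

lemma not_resolving_if_twins:
  assumes S: "S \<subseteq> V" and v: "major V E v"
    and x: "x \<in> pendant_leaves V E v" and y: "y \<in> pendant_leaves V E v"
    and "x \<noteq> y" "x \<notin> S" "y \<notin> S"
  shows "\<not> dist_k_resolving V E k S"
proof
  assume "dist_k_resolving V E k S"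
  moreover have "x \<in> V" "y \<in> V" using x y pendant_leaves_subset_V by auto
  ultimately obtain z where z: "z \<in> S" "dist_k V E k x z \<noteq> dist_k V E k y z"
    using \<open>x \<noteq> y\<close> unfolding dist_k_resolving_def by blast
  have "z \<in> V" "z \<noteq> x" "z \<noteq> y" using z(1) S assms by auto
  then have "d x z = d y z"
    using gdist_from_leaf[OF pendant_leavesD(1,3)[OF x]] gdist_from_leaf[OF pendant_leavesD(1,3)[OF y]]
    by simp
  then show False using z(2) unfolding dist_k_def by simp
qed

lemma not_resolving_if_two_free_leaves:
  assumes "S \<subseteq> V" "major V E v" "2 \<le> card (pendant_leaves V E v - S)"
  shows "\<not> dist_k_resolving V E k S"
proof -
  have "finite (pendant_leaves V E v - S)" using finite_pendant_leaves by simp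
  moreover have "\<not> card (pendant_leaves V E v - S) \<le> Suc 0" using assms(3) by simp
  ultimately have "\<not> (\<forall>x\<in>pendant_leaves V E v - S. \<forall>y\<in>pendant_leaves V E v - S. x = y)"
    using card_le_Suc0_iff_eq by blast
  then obtain x y where "x \<in> pendant_leaves V E v - S" "y \<in> pendant_leaves V E v - S" "x \<noteq> y"
    by blast
  then show ?thesis using not_resolving_if_twins[OF assms(1,2), of x y] by blast
qed

lemma not_resolving_1_if_isolated:
  assumes S: "S \<subseteq> V" and "x \<in> V - S" "y \<in> V - S" "x \<noteq> y"
    and "\<And>z. z \<in> S \<Longrightarrow> \<not> E x z \<and> \<not> E y z"
  shows "\<not> dist_k_resolving V E 1 S"
proof
  assume "dist_k_resolving V E 1 S"
  then obtain z where z: "z \<in> S" "dist_k V E 1 x z \<noteq> dist_k V E 1 y z"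
    using assms unfolding dist_k_resolving_def by blast
  have "z \<in> V" using z(1) S by blast
  then have "d x z \<ge> 2" "d y z \<ge> 2" using gdist_ge_2 assms z(1) by blast+
  then show False using z(2) unfolding dist_k_def by simp
qed

lemma open_star_cases:
  assumes "major V E a" "2 \<le> card (star V E a - S)"
  shows "2 \<le> card (pendant_leaves V E a - S) \<or> (a \<notin> S \<and> (\<exists>x\<in>pendant_leaves V E a. x \<notin> S))"
proof (cases "a \<in> S")
  case True
  then have "star V E a - S = pendant_leaves V E a - S" unfolding star_def by blast
  then show ?thesis using assms(2) by simp
next
  case False
  then have "star V E a - S = insert a (pendant_leaves V E a - S)" unfolding star_def by blast
  then have "pendant_leaves V E a - S \<noteq> {}" using assms(2) by (intro notI) simp
  then show ?thesis using False by blast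
qed

lemma not_resolving_1_if_two_open_stars:
  assumes S: "S \<subseteq> V" and a: "major V E a" and b: "major V E b" and "a \<noteq> b"
    and open_a: "2 \<le> card (star V E a - S)" and open_b: "2 \<le> card (star V E b - S)"
  shows "\<not> dist_k_resolving V E 1 S"
proof -
  consider "2 \<le> card (pendant_leaves V E a - S)" | "2 \<le> card (pendant_leaves V E b - S)"
    | x y where "a \<notin> S" "b \<notin> S" "x \<in> pendant_leaves V E a" "x \<notin> S"
        "y \<in> pendant_leaves V E b" "y \<notin> S"
    using open_star_cases[OF a open_a] open_star_cases[OF b open_b] by blast
  then show ?thesis
  proof cases
    case (3 x y)
    have "x \<noteq> y" using 3 pendant_leaves_disjoint \<open>a \<noteq> b\<close> by blast
    moreover have "\<not> E x z \<and> \<not> E y z" if "z \<in> S" for z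
      using 3 that leaf_neighbour_unique[OF pendant_leavesD(1,3)[OF \<open>x \<in> _\<close>], of z]
        leaf_neighbour_unique[OF pendant_leavesD(1,3)[OF \<open>y \<in> _\<close>], of z] by blast
    ultimately show ?thesis
      using not_resolving_1_if_isolated[OF S] 3 pendant_leaves_subset_V by blast
  qed (use not_resolving_if_two_free_leaves[OF S] a b in blast)+
qed

end

section \<open>Maker's pairing strategy\<close>

lemma card_Diff_insert_less:
  assumes "finite V" "y \<in> V - A"
  shows "card (V - insert y A) < card (V - A)"
proof -
  have "V - insert y A = (V - A) - {y}" by blast
  then show ?thesis using card_Diff1_less[of "V - A" y] assms by simp
qed

locale pairing_strategy =
  fixes V :: "'a set" and E :: "'a \<Rightarrow> 'a \<Rightarrow> bool" and k :: nat
    and Ps :: "'a set set" and B :: "'a set"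
  assumes finite_V: "finite V"
    and pairs: "\<And>P. P \<in> Ps \<Longrightarrow> P \<subseteq> V \<and> card P = 2"
    and pairs_disjoint: "pairwise disjnt Ps"
    and hitting_resolves: "\<And>S. B \<subseteq> S \<Longrightarrow> \<forall>P\<in>Ps. P \<inter> S \<noteq> {} \<Longrightarrow> dist_k_resolving V E k S"
begin

definition pairing_invariant :: "'a set \<Rightarrow> 'a set \<Rightarrow> bool" where
  "pairing_invariant Mk Br \<longleftrightarrow> B \<subseteq> Mk \<and> Mk \<subseteq> V \<and> Br \<subseteq> V \<and> Mk \<inter> Br = {} \<and>
     (\<forall>P\<in>Ps. P \<inter> Mk \<noteq> {} \<or> P \<inter> Br = {})"

lemma resolving_at_end:
  assumes inv: "pairing_invariant Mk Br" and free: "V - (Mk \<union> Br) \<subseteq> {x}"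
  shows "dist_k_resolving V E k Mk"
proof (rule hitting_resolves)
  show "B \<subseteq> Mk" using inv by (simp add: pairing_invariant_def)
  show "\<forall>P\<in>Ps. P \<inter> Mk \<noteq> {}"
  proof (intro ballI notI)
    fix P assume P: "P \<in> Ps" and "P \<inter> Mk = {}"
    then have "P \<inter> Br = {}" using inv by (auto simp: pairing_invariant_def)
    then have "P \<subseteq> {x}" using \<open>P \<inter> Mk = {}\<close> pairs[OF P] free by blast
    then have "card P \<le> 1" using card_mono[of "{x}" P] by simp
    then show False using pairs[OF P] by simp
  qed
qed

lemma pairing_reply:
  assumes inv: "pairing_invariant Mk Br" and x: "x \<in> V - (Mk \<union> Br)"
    and free: "V - (Mk \<union> insert x Br) \<noteq> {}"
  obtains y where "y \<in> V - (Mk \<union> insert x Br)" "pairing_invariant (insert y Mk) (insert x Br)"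
proof (cases "\<exists>P\<in>Ps. x \<in> P \<and> P \<inter> Mk = {}")
  case True
  then obtain P where P: "P \<in> Ps" "x \<in> P" "P \<inter> Mk = {}" by blast
  have "P \<inter> Br = {}" using inv P by (auto simp: pairing_invariant_def)
  obtain y where y: "P = {x, y}" "y \<noteq> x"
    using pairs[OF P(1)] P(2) by (metis card_2_iff doubleton_eq_iff insert_iff singletonD)
  have y_free: "y \<in> V - (Mk \<union> insert x Br)" using y P \<open>P \<inter> Br = {}\<close> pairs[OF P(1)] by blast
  have "Q \<inter> insert y Mk \<noteq> {} \<or> Q \<inter> insert x Br = {}" if Q: "Q \<in> Ps" for Q
  proof (cases "Q = P")
    case False
    then have "x \<notin> Q" using pairs_disjoint Q P(1,2) unfolding pairwise_def disjnt_def by blast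
    then show ?thesis using inv Q by (auto simp: pairing_invariant_def)
  qed (use y in blast)
  then have "pairing_invariant (insert y Mk) (insert x Br)"
    using inv x y_free by (auto simp: pairing_invariant_def)
  then show ?thesis using that y_free by blast
next
  case False
  obtain y where y_free: "y \<in> V - (Mk \<union> insert x Br)" using free by blast
  have "pairing_invariant (insert y Mk) (insert x Br)"
    using inv x y_free False by (auto simp: pairing_invariant_def)
  then show ?thesis using that y_free by blast
qed

lemma maker_wins_second:
  "pairing_invariant Mk Br \<Longrightarrow> maker_wins V E k Mk Br False"
proof (induction "card (V - (Mk \<union> Br))" arbitrary: Mk Br rule: less_induct)
  case less
  show ?case
  proof (cases "V - (Mk \<union> Br) = {}")
    case True
    then show ?thesis using resolving_at_end[OF less.prems] by (intro maker_wins.finished) auto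
  next
    case False
    have "maker_wins V E k Mk (insert x Br) True" if x: "x \<in> V - (Mk \<union> Br)" for x
    proof (cases "V - (Mk \<union> insert x Br) = {}")
      case True
      then show ?thesis
        using resolving_at_end[OF less.prems, of x] by (intro maker_wins.finished) auto
    next
      case False
      then obtain y where y: "y \<in> V - (Mk \<union> insert x Br)"
        and inv: "pairing_invariant (insert y Mk) (insert x Br)"
        using pairing_reply[OF less.prems x] by blast
      have "card (V - (insert y Mk \<union> insert x Br)) < card (V - (Mk \<union> Br))"
        using card_Diff_insert_less[OF finite_V y] card_Diff_insert_less[OF finite_V x]
        by (simp add: insert_commute)
      then have "maker_wins V E k (insert y Mk) (insert x Br) False" using less.hyps inv by blast
      then show ?thesis using y by (intro maker_wins.maker_move) auto
    qed
    then show ?thesis using False by (intro maker_wins.breaker_move) auto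
  qed
qed

lemma maker_wins_first:
  assumes inv: "pairing_invariant Mk Br"
  shows "maker_wins V E k Mk Br True"
proof (cases "V - (Mk \<union> Br) = {}")
  case True
  then show ?thesis using resolving_at_end[OF inv] by (intro maker_wins.finished) auto
next
  case False
  then obtain y where y: "y \<in> V - (Mk \<union> Br)" by blast
  then have "pairing_invariant (insert y Mk) Br" using inv by (auto simp: pairing_invariant_def)
  then show ?thesis using maker_wins_second y by (intro maker_wins.maker_move) auto
qed

lemma maker_wins_from_start:
  assumes "B \<subseteq> V"
  shows "maker_wins V E k B {} False" "B = {} \<Longrightarrow> maker_wins V E k {} {} True"
    "B = {a} \<Longrightarrow> maker_wins V E k {} {} True"
proof -
  have inv: "pairing_invariant B {}" using assms by (simp add: pairing_invariant_def)
  show "maker_wins V E k B {} False" by (rule maker_wins_second[OF inv])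
  show "B = {} \<Longrightarrow> maker_wins V E k {} {} True" using maker_wins_first[OF inv] by simp
  show "B = {a} \<Longrightarrow> maker_wins V E k {} {} True"
    using maker_wins_second[OF inv] assms by (intro maker_wins.maker_move[of a]) auto
qed

end

section \<open>Breaker's blocking strategy\<close>

lemma breaker_wins_by_invariant:
  assumes final: "\<And>Mk Br. I Mk Br \<Longrightarrow> V - (Mk \<union> Br) = {} \<Longrightarrow> \<not> dist_k_resolving V E k Mk"
    and reply: "\<And>Mk Br v. I Mk Br \<Longrightarrow> v \<in> V - (Mk \<union> Br) \<Longrightarrow>
       (V - (insert v Mk \<union> Br) = {} \<longrightarrow> \<not> dist_k_resolving V E k (insert v Mk)) \<and>
       (V - (insert v Mk \<union> Br) \<noteq> {} \<longrightarrow> (\<exists>w \<in> V - (insert v Mk \<union> Br). I (insert v Mk) (insert w Br)))"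
    and inv: "I Mk Br"
  shows "\<not> maker_wins V E k Mk Br True"
proof -
  have "(mt \<longrightarrow> \<not> I Mk Br) \<and> (\<not> mt \<longrightarrow> \<not> ((V - (Mk \<union> Br) = {} \<longrightarrow> \<not> dist_k_resolving V E k Mk) \<and>
       (V - (Mk \<union> Br) \<noteq> {} \<longrightarrow> (\<exists>w \<in> V - (Mk \<union> Br). I Mk (insert w Br)))))"
    if "maker_wins V E k Mk Br mt" for Mk Br mt
    using that
  proof (induction rule: maker_wins.induct)
    case (finished Mk Br mt)
    then show ?case using final by blast
  next
    case (maker_move v Mk Br)
    then show ?case using reply by blast
  next
    case (breaker_move Mk Br)
    then show ?case by blast
  qed
  then show ?thesis using inv by blast
qed

lemma card_free_ge_2:
  assumes "finite U" "card (Mk \<inter> U) + 2 \<le> card U"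
  shows "2 \<le> card (U - Mk)"
  using assms by (simp add: card_Diff_subset_Int Int_commute)

lemma card_ge_2_obtains:
  assumes "2 \<le> card A"
  obtains x y where "x \<in> A" "y \<in> A" "x \<noteq> y"
proof -
  have "finite A"
  proof (rule ccontr)
    assume "infinite A"
    then show False using assms by simp
  qed
  moreover have "\<not> card A \<le> Suc 0" using assms by simp
  ultimately have "\<not> (\<forall>x\<in>A. \<forall>y\<in>A. x = y)" using card_le_Suc0_iff_eq by blast
  then show ?thesis using that by blast
qed

lemma card_Int_disjoint_le:
  assumes "finite U" "A \<inter> B = {}"
  shows "card (A \<inter> U) + card (B \<inter> U) \<le> card U"
proof -
  have "card (A \<inter> U) + card (B \<inter> U) = card ((A \<inter> U) \<union> (B \<inter> U))"
    using assms by (subst card_Un_disjoint) auto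
  also have "\<dots> \<le> card U" using assms by (intro card_mono) auto
  finally show ?thesis .
qed

lemma card_Int_partition:
  assumes "finite U" "A \<inter> B = {}" "U \<subseteq> A \<union> B"
  shows "card (A \<inter> U) + card (B \<inter> U) = card U"
proof -
  have "card (A \<inter> U) + card (B \<inter> U) = card ((A \<inter> U) \<union> (B \<inter> U))"
    using assms by (subst card_Un_disjoint) auto
  also have "(A \<inter> U) \<union> (B \<inter> U) = U" using assms by blast
  finally show ?thesis .
qed

text \<open>
  Breaker answers Maker inside \<open>U0\<close> so that Maker ends with at most half of it (rounded up),
  and inside the disjoint triples of \<open>Us\<close> so that Maker ends with at most one vertex in at
  least \<open>t\<close> of them: a triple is secured once Breaker owns two of its vertices, or one while
  Maker owns none, and every two untouched triples are worth one secured triple.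
\<close>

locale triple_blocking =
  fixes V :: "'a set" and E :: "'a \<Rightarrow> 'a \<Rightarrow> bool" and k :: nat
    and U0 :: "'a set" and Us :: "'a set set" and t :: nat
  assumes finite_V: "finite V" and U0_subset: "U0 \<subseteq> V"
    and triples: "\<And>U. U \<in> Us \<Longrightarrow> U \<subseteq> V \<and> card U = 3"
    and triples_disjoint: "pairwise disjnt Us"
    and triples_disjoint_U0: "\<And>U. U \<in> Us \<Longrightarrow> U \<inter> U0 = {}"
    and fails: "\<And>Mk. Mk \<subseteq> V \<Longrightarrow> 2 * card (Mk \<inter> U0) \<le> card U0 + 1 \<Longrightarrow>
        t \<le> card {U \<in> Us. card (Mk \<inter> U) \<le> 1} \<Longrightarrow> \<not> dist_k_resolving V E k Mk"
begin

definition secured :: "'a set \<Rightarrow> 'a set \<Rightarrow> 'a set set" where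
  "secured Mk Br = {U \<in> Us. 2 \<le> card (Br \<inter> U) \<or> (card (Br \<inter> U) = 1 \<and> Mk \<inter> U = {})}"

definition untouched :: "'a set \<Rightarrow> 'a set \<Rightarrow> 'a set set" where
  "untouched Mk Br = {U \<in> Us. U \<inter> (Mk \<union> Br) = {}}"

definition balanced :: "'a set \<Rightarrow> 'a set \<Rightarrow> bool" where
  "balanced Mk Br \<longleftrightarrow> card (Mk \<inter> U0) \<le> card (Br \<inter> U0) \<or>
     (U0 \<subseteq> Mk \<union> Br \<and> card (Mk \<inter> U0) \<le> Suc (card (Br \<inter> U0)))"

definition potential :: "'a set \<Rightarrow> 'a set \<Rightarrow> nat" where
  "potential Mk Br = card (secured Mk Br) + card (untouched Mk Br) div 2"

definition blocking_invariant :: "'a set \<Rightarrow> 'a set \<Rightarrow> bool" where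
  "blocking_invariant Mk Br \<longleftrightarrow> Mk \<subseteq> V \<and> Br \<subseteq> V \<and> Mk \<inter> Br = {} \<and> balanced Mk Br \<and>
     t \<le> potential Mk Br"

lemma finite_triples: "finite Us"
  using finite_subset[of Us "Pow V"] triples finite_V by auto

lemma finite_triple: "U \<in> Us \<Longrightarrow> finite U"
  using triples finite_V finite_subset by metis

lemma finite_U0: "finite U0"
  using finite_subset[OF U0_subset finite_V] .

lemma finite_secured: "finite (secured Mk Br)"
  unfolding secured_def using finite_triples by simp

lemma finite_untouched: "finite (untouched Mk Br)"
  unfolding untouched_def using finite_triples by simp

lemma triples_apart: "U \<in> Us \<Longrightarrow> U' \<in> Us \<Longrightarrow> U \<noteq> U' \<Longrightarrow> x \<in> U \<Longrightarrow> x \<notin> U'"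
  using triples_disjoint unfolding pairwise_def disjnt_def by blast

lemma secured_insert_Br: "secured Mk Br \<subseteq> secured Mk (insert w Br)"
proof
  fix U assume U: "U \<in> secured Mk Br"
  then have "U \<in> Us" by (simp add: secured_def)
  then have "card (Br \<inter> U) \<le> card (insert w Br \<inter> U)"
    using finite_triple by (intro card_mono) auto
  then show "U \<in> secured Mk (insert w Br)"
    using U by (auto simp: secured_def)
qed

lemma secured_insert_Mk:
  assumes "\<not> (\<exists>U\<in>Us. v \<in> U \<and> card (Br \<inter> U) = 1 \<and> Mk \<inter> U = {})"
  shows "secured Mk Br \<subseteq> secured (insert v Mk) Br"
  using assms unfolding secured_def by auto

lemma secured_unchanged:
  "v \<notin> U \<Longrightarrow> w \<notin> U \<Longrightarrow> U \<in> secured (insert v Mk) (insert w Br) \<longleftrightarrow> U \<in> secured Mk Br"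
  unfolding secured_def by (simp add: Int_insert_left)

lemma untouched_unchanged:
  "v \<notin> U \<Longrightarrow> w \<notin> U \<Longrightarrow> U \<in> untouched (insert v Mk) (insert w Br) \<longleftrightarrow> U \<in> untouched Mk Br"
  unfolding untouched_def by auto

lemma potential_mono:
  assumes "secured Mk Br \<subseteq> secured Mk' Br'" "untouched Mk Br \<subseteq> untouched Mk' Br'"
  shows "potential Mk Br \<le> potential Mk' Br'"
  using card_mono[OF finite_secured assms(1)] card_mono[OF finite_untouched assms(2)]
  unfolding potential_def by (simp add: add_mono div_le_mono)

lemma untouched_insert: "untouched (insert v Mk) Br = {U \<in> untouched Mk Br. v \<notin> U}"
  "untouched Mk (insert w Br) = {U \<in> untouched Mk Br. w \<notin> U}"
  unfolding untouched_def by auto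

lemma card_le_Suc_card_avoiding:
  assumes "A \<subseteq> Us"
  shows "card A \<le> Suc (card {U \<in> A. x \<notin> U})"
proof -
  have "finite A" using assms finite_triples finite_subset by blast
  moreover have "\<forall>U\<in>{U \<in> A. x \<in> U}. \<forall>U'\<in>{U \<in> A. x \<in> U}. U = U'"
    using assms triples_apart by blast
  ultimately have "card {U \<in> A. x \<in> U} \<le> Suc 0" by (subst card_le_Suc0_iff_eq) auto
  moreover have "A = {U \<in> A. x \<notin> U} \<union> {U \<in> A. x \<in> U}" by blast
  then have "card A \<le> card {U \<in> A. x \<notin> U} + card {U \<in> A. x \<in> U}"
    using card_Un_le[of "{U \<in> A. x \<notin> U}" "{U \<in> A. x \<in> U}"] by simp
  ultimately show ?thesis by simp
qed

lemma card_untouched_insert: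
  "card (untouched Mk Br) \<le> Suc (card (untouched (insert x Mk) Br))"
  "card (untouched Mk Br) \<le> Suc (card (untouched Mk (insert x Br)))"
  using card_le_Suc_card_avoiding[of "untouched Mk Br" x] unfolding untouched_insert
  by (simp_all add: untouched_def)

lemma fresh_triple_secured:
  assumes "U \<in> untouched Mk Br" "w \<in> U"
  shows "U \<in> secured Mk (insert w Br)" "U \<notin> secured Mk Br"
proof -
  have U: "U \<in> Us" "U \<inter> (Mk \<union> Br) = {}" using assms(1) by (auto simp: untouched_def)
  then have "insert w Br \<inter> U = {w}" "Br \<inter> U = {}" "Mk \<inter> U = {}" using assms(2) by blast+
  then show "U \<in> secured Mk (insert w Br)" "U \<notin> secured Mk Br"
    using U(1) unfolding secured_def by auto
qed

lemma balanced_insert_Br: "balanced Mk Br \<Longrightarrow> balanced Mk (insert w Br)"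
proof -
  have "card (Br \<inter> U0) \<le> card (insert w Br \<inter> U0)"
    using finite_U0 by (intro card_mono) auto
  then show "balanced Mk Br \<Longrightarrow> balanced Mk (insert w Br)"
    unfolding balanced_def by auto
qed

lemma balanced_insert_Mk_outside: "v \<notin> U0 \<Longrightarrow> balanced Mk Br \<Longrightarrow> balanced (insert v Mk) Br"
  unfolding balanced_def by (auto simp: Int_insert_left)

lemma blocking_invariant_insert:
  assumes inv: "blocking_invariant Mk Br" and v: "v \<in> V - (Mk \<union> Br)"
    and w: "w \<in> V - (insert v Mk \<union> Br)"
    and "balanced (insert v Mk) (insert w Br)" "potential Mk Br \<le> potential (insert v Mk) (insert w Br)"
  shows "blocking_invariant (insert v Mk) (insert w Br)"
  using assms unfolding blocking_invariant_def by auto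

lemma reply_completing_triple:
  assumes inv: "blocking_invariant Mk Br" and v: "v \<in> V - (Mk \<union> Br)"
    and U: "U \<in> Us" "v \<in> U" "card (Br \<inter> U) = 1" "Mk \<inter> U = {}"
  obtains w where "w \<in> V - (insert v Mk \<union> Br)" "blocking_invariant (insert v Mk) (insert w Br)"
proof -
  have "card (U - Br) = 2"
    using finite_triple[OF U(1)] triples[OF U(1)] U(3) by (simp add: card_Diff_subset_Int Int_commute)
  then have "card (U - Br - {v}) = 1" using v U(2) by simp
  then obtain w where "U - Br - {v} = {w}" by (rule card_1_singletonE)
  then have wU: "w \<in> U" "w \<notin> Br" "w \<noteq> v" by auto
  have w: "w \<in> V - (insert v Mk \<union> Br)" using wU U(4) triples[OF U(1)] by blast
  have "insert w Br \<inter> U = insert w (Br \<inter> U)" using wU(1) by blast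
  then have "card (insert w Br \<inter> U) = 2" using U(3) wU(2) finite_triple[OF U(1)] by simp
  then have U_secured: "U \<in> secured (insert v Mk) (insert w Br)" using U(1) by (simp add: secured_def)
  have apart: "v \<notin> U'" "w \<notin> U'" if "U' \<in> Us" "U' \<noteq> U" for U'
    using triples_apart[OF U(1) that(1) not_sym[OF that(2)]] U(2) wU(1) by simp_all
  have "secured Mk Br \<subseteq> secured (insert v Mk) (insert w Br)"
  proof
    fix U' assume U': "U' \<in> secured Mk Br"
    then have "U' \<in> Us" by (simp add: secured_def)
    then show "U' \<in> secured (insert v Mk) (insert w Br)"
      using U_secured secured_unchanged apart U' by (cases "U' = U") auto
  qed
  moreover have "untouched Mk Br \<subseteq> untouched (insert v Mk) (insert w Br)"
  proof
    fix U' assume U': "U' \<in> untouched Mk Br"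
    then have U'_triple: "U' \<in> Us" and "Br \<inter> U' = {}" by (auto simp: untouched_def)
    then have "U' \<noteq> U" using U(3) by auto
    then show "U' \<in> untouched (insert v Mk) (insert w Br)"
      using untouched_unchanged apart[OF U'_triple] U' by blast
  qed
  moreover have "balanced (insert v Mk) (insert w Br)"
    using inv triples_disjoint_U0[OF U(1)] U(2) balanced_insert_Mk_outside balanced_insert_Br
    unfolding blocking_invariant_def by blast
  ultimately show ?thesis
    using that w blocking_invariant_insert[OF inv v w] potential_mono by blast
qed

lemma reply_in_U0:
  assumes inv: "blocking_invariant Mk Br" and v: "v \<in> V - (Mk \<union> Br)" "v \<in> U0"
    and w: "w \<in> V - (insert v Mk \<union> Br)" "w \<in> U0"
  shows "blocking_invariant (insert v Mk) (insert w Br)"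
proof (rule blocking_invariant_insert[OF inv v(1) w(1)])
  have outside: "v \<notin> U" "w \<notin> U" if "U \<in> Us" for U
    using triples_disjoint_U0[OF that] v(2) w(2) by auto
  have "secured Mk Br \<subseteq> secured (insert v Mk) (insert w Br)"
    using secured_unchanged outside by (auto simp: secured_def)
  moreover have "untouched Mk Br \<subseteq> untouched (insert v Mk) (insert w Br)"
    using untouched_unchanged outside by (auto simp: untouched_def)
  ultimately show "potential Mk Br \<le> potential (insert v Mk) (insert w Br)"
    by (rule potential_mono)
  have "\<not> U0 \<subseteq> Mk \<union> Br" using v by blast
  then have "card (Mk \<inter> U0) \<le> card (Br \<inter> U0)"
    using inv by (auto simp: blocking_invariant_def balanced_def)
  moreover have "insert v Mk \<inter> U0 = insert v (Mk \<inter> U0)" "insert w Br \<inter> U0 = insert w (Br \<inter> U0)"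
    "v \<notin> Mk \<inter> U0" "w \<notin> Br \<inter> U0" using v w by auto
  ultimately show "balanced (insert v Mk) (insert w Br)"
    using finite_U0 by (simp add: balanced_def)
qed

lemma final_share_of_U0:
  assumes inv: "blocking_invariant Mk Br" and Mk': "Mk' \<subseteq> insert v Mk"
    and disj: "Mk' \<inter> Br = {}" and full: "V \<subseteq> Mk' \<union> Br"
  shows "2 * card (Mk' \<inter> U0) \<le> card U0 + 1"
proof -
  have "card (Mk' \<inter> U0) \<le> Suc (card (Br \<inter> U0))"
  proof (cases "card (Mk \<inter> U0) \<le> card (Br \<inter> U0)")
    case True
    have "Mk' \<inter> U0 \<subseteq> insert v (Mk \<inter> U0)" using Mk' by blast
    then have "card (Mk' \<inter> U0) \<le> card (insert v (Mk \<inter> U0))"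
      using finite_U0 by (intro card_mono) auto
    also have "\<dots> \<le> Suc (card (Mk \<inter> U0))" using finite_U0 by (simp add: card_insert_if)
    finally show ?thesis using True by simp
  next
    case False
    then have "U0 \<subseteq> Mk \<union> Br" "card (Mk \<inter> U0) \<le> Suc (card (Br \<inter> U0))"
      using inv by (auto simp: blocking_invariant_def balanced_def)
    moreover have "Mk' \<inter> U0 \<subseteq> Mk \<inter> U0" using calculation(1) disj Mk' by blast
    ultimately show ?thesis using finite_U0 card_mono[of "Mk \<inter> U0" "Mk' \<inter> U0"] by simp
  qed
  moreover have "card (Mk' \<inter> U0) + card (Br \<inter> U0) = card U0"
    using card_Int_partition[OF finite_U0 disj] U0_subset full by blast
  ultimately show ?thesis by linarith
qed

lemma final_secured_triples:
  assumes inv: "blocking_invariant Mk Br" and Mk': "Mk' \<subseteq> insert v Mk"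
    and disj: "Mk' \<inter> Br = {}" and full: "V \<subseteq> Mk' \<union> Br"
  shows "t \<le> card {U \<in> Us. card (Mk' \<inter> U) \<le> 1}"
proof -
  have "untouched Mk Br = {}"
  proof (rule ccontr)
    assume "untouched Mk Br \<noteq> {}"
    then obtain U where U: "U \<in> Us" "U \<inter> (Mk \<union> Br) = {}" by (auto simp: untouched_def)
    then have "U \<subseteq> {v}" using triples[OF U(1)] full Mk' by blast
    then show False using triples[OF U(1)] card_mono[of "{v}" U] by simp
  qed
  then have "t \<le> card (secured Mk Br)" using inv by (simp add: blocking_invariant_def potential_def)
  also have "\<dots> \<le> card {U \<in> Us. card (Mk' \<inter> U) \<le> 1}"
  proof (intro card_mono subsetI)
    show "finite {U \<in> Us. card (Mk' \<inter> U) \<le> 1}" using finite_triples by simp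
    fix U assume U: "U \<in> secured Mk Br"
    then have UUs: "U \<in> Us" by (simp add: secured_def)
    have parts: "card (Mk' \<inter> U) + card (Br \<inter> U) \<le> 3"
      using card_Int_disjoint_le[OF finite_triple[OF UUs] disj] triples[OF UUs] by simp
    have "card (Mk' \<inter> U) \<le> 1"
    proof (cases "2 \<le> card (Br \<inter> U)")
      case False
      then have "Mk \<inter> U = {}" using U by (auto simp: secured_def)
      then have "Mk' \<inter> U \<subseteq> {v}" using Mk' by blast
      then show ?thesis using card_mono[of "{v}" "Mk' \<inter> U"] by simp
    qed (use parts in simp)
    then show "U \<in> {U \<in> Us. card (Mk' \<inter> U) \<le> 1}" using UUs by simp
  qed
  finally show ?thesis .
qed

lemma final_position_fails:
  assumes "blocking_invariant Mk Br" "Mk' \<subseteq> insert v Mk" "Mk' \<subseteq> V" "Mk' \<inter> Br = {}"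
    "V \<subseteq> Mk' \<union> Br"
  shows "\<not> dist_k_resolving V E k Mk'"
  using fails[OF assms(3)] final_share_of_U0[OF assms(1,2,4,5)] final_secured_triples[OF assms(1,2,4,5)]
  by blast

lemma balanced_insert_Mk:
  assumes inv: "blocking_invariant Mk Br" and v: "v \<in> V - (Mk \<union> Br)"
    and no_U0: "\<not> (v \<in> U0 \<and> (\<exists>w\<in>U0. w \<in> V - (insert v Mk \<union> Br)))"
  shows "balanced (insert v Mk) Br"
proof (cases "v \<in> U0")
  case True
  then have full: "U0 \<subseteq> insert v Mk \<union> Br" using no_U0 U0_subset by blast
  have "\<not> U0 \<subseteq> Mk \<union> Br" using True v by blast
  then have "card (Mk \<inter> U0) \<le> card (Br \<inter> U0)"
    using inv by (auto simp: blocking_invariant_def balanced_def)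
  moreover have "insert v Mk \<inter> U0 = insert v (Mk \<inter> U0)" "v \<notin> Mk \<inter> U0" using True v by auto
  ultimately show ?thesis using full finite_U0 by (simp add: balanced_def)
next
  case False
  then show ?thesis using inv balanced_insert_Mk_outside by (simp add: blocking_invariant_def)
qed

lemma reply_in_untouched_triple:
  assumes inv: "blocking_invariant Mk Br" and v: "v \<in> V - (Mk \<union> Br)"
    and secured_v: "secured Mk Br \<subseteq> secured (insert v Mk) Br"
    and balanced_v: "balanced (insert v Mk) Br" and U: "U \<in> untouched (insert v Mk) Br"
  obtains w where "w \<in> V - (insert v Mk \<union> Br)" "blocking_invariant (insert v Mk) (insert w Br)"
proof -
  have U_triple: "U \<in> Us" and U_free: "U \<inter> (insert v Mk \<union> Br) = {}"
    using U by (auto simp: untouched_def)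
  have "U \<noteq> {}" using triples[OF U_triple] by auto
  then obtain w where "w \<in> U" by blast
  then have w: "w \<in> V - (insert v Mk \<union> Br)" using triples[OF U_triple] U_free by blast
  have "insert U (secured (insert v Mk) Br) \<subseteq> secured (insert v Mk) (insert w Br)"
    using fresh_triple_secured(1)[OF U \<open>w \<in> U\<close>] secured_insert_Br by blast
  from card_mono[OF finite_secured this]
  have "Suc (card (secured (insert v Mk) Br)) \<le> card (secured (insert v Mk) (insert w Br))"
    using fresh_triple_secured(2)[OF U \<open>w \<in> U\<close>] finite_secured by simp
  then have "Suc (card (secured Mk Br)) \<le> card (secured (insert v Mk) (insert w Br))"
    using card_mono[OF finite_secured secured_v] by simp
  then have "potential Mk Br \<le> potential (insert v Mk) (insert w Br)"
    using card_untouched_insert(1)[of Mk Br v] card_untouched_insert(2)[of "insert v Mk" Br w]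
    unfolding potential_def by linarith
  then show ?thesis
    using that w blocking_invariant_insert[OF inv v w] balanced_insert_Br[OF balanced_v] by blast
qed

lemma reply_elsewhere:
  assumes inv: "blocking_invariant Mk Br" and v: "v \<in> V - (Mk \<union> Br)"
    and no_triple: "\<not> (\<exists>U\<in>Us. v \<in> U \<and> card (Br \<inter> U) = 1 \<and> Mk \<inter> U = {})"
    and no_U0: "\<not> (v \<in> U0 \<and> (\<exists>w\<in>U0. w \<in> V - (insert v Mk \<union> Br)))"
    and free: "V - (insert v Mk \<union> Br) \<noteq> {}"
  obtains w where "w \<in> V - (insert v Mk \<union> Br)" "blocking_invariant (insert v Mk) (insert w Br)"
proof -
  have balanced_v: "balanced (insert v Mk) Br" using balanced_insert_Mk[OF inv v no_U0] .
  have secured_v: "secured Mk Br \<subseteq> secured (insert v Mk) Br"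
    using secured_insert_Mk[OF no_triple] .
  show ?thesis
  proof (cases "untouched (insert v Mk) Br = {}")
    case False
    then show ?thesis using reply_in_untouched_triple[OF inv v secured_v balanced_v] that by blast
  next
    case True
    obtain w where w: "w \<in> V - (insert v Mk \<union> Br)" using free by blast
    have "card (untouched Mk Br) div 2 = 0" using card_untouched_insert(1)[of Mk Br v] True by simp
    moreover have "card (secured Mk Br) \<le> card (secured (insert v Mk) (insert w Br))"
      using secured_v secured_insert_Br finite_secured by (meson card_mono subset_trans)
    ultimately have "potential Mk Br \<le> potential (insert v Mk) (insert w Br)"
      unfolding potential_def by linarith
    then show ?thesis
      using that w blocking_invariant_insert[OF inv v w] balanced_insert_Br[OF balanced_v] by blast
  qed
qed

lemma blocking_reply:
  assumes inv: "blocking_invariant Mk Br" and v: "v \<in> V - (Mk \<union> Br)"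
  shows "(V - (insert v Mk \<union> Br) = {} \<longrightarrow> \<not> dist_k_resolving V E k (insert v Mk)) \<and>
    (V - (insert v Mk \<union> Br) \<noteq> {} \<longrightarrow>
      (\<exists>w \<in> V - (insert v Mk \<union> Br). blocking_invariant (insert v Mk) (insert w Br)))"
proof (intro conjI impI)
  assume "V - (insert v Mk \<union> Br) = {}"
  then show "\<not> dist_k_resolving V E k (insert v Mk)"
    using inv v by (intro final_position_fails[of Mk Br _ v]) (auto simp: blocking_invariant_def)
next
  assume free: "V - (insert v Mk \<union> Br) \<noteq> {}"
  consider U where "U \<in> Us" "v \<in> U" "card (Br \<inter> U) = 1" "Mk \<inter> U = {}"
    | w where "v \<in> U0" "w \<in> U0" "w \<in> V - (insert v Mk \<union> Br)"
    | "\<not> (\<exists>U\<in>Us. v \<in> U \<and> card (Br \<inter> U) = 1 \<and> Mk \<inter> U = {})"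
      "\<not> (v \<in> U0 \<and> (\<exists>w\<in>U0. w \<in> V - (insert v Mk \<union> Br)))"
    by blast
  then show "\<exists>w \<in> V - (insert v Mk \<union> Br). blocking_invariant (insert v Mk) (insert w Br)"
  proof cases
    case 1
    then show ?thesis using reply_completing_triple[OF inv v] by metis
  next
    case (2 w)
    then show ?thesis using reply_in_U0[OF inv v] by blast
  next
    case 3
    then show ?thesis using reply_elsewhere[OF inv v _ _ free] by metis
  qed
qed

lemma breaker_wins:
  assumes "blocking_invariant Mk Br"
  shows "\<not> maker_wins V E k Mk Br True"
proof (rule breaker_wins_by_invariant[where I = blocking_invariant])
  show "\<not> dist_k_resolving V E k Mk'"
    if "blocking_invariant Mk' Br'" "V - (Mk' \<union> Br') = {}" for Mk' Br'
    using that by (intro final_position_fails[of Mk' Br' Mk']) (auto simp: blocking_invariant_def)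
qed (use assms blocking_reply in auto)

lemma breaker_wins_first:
  assumes "t \<le> card Us div 2"
  shows "\<not> maker_wins V E k {} {} True"
proof (rule breaker_wins)
  have "secured {} {} = {}" "untouched {} {} = Us" by (auto simp: secured_def untouched_def)
  then show "blocking_invariant {} {}"
    using assms by (simp add: blocking_invariant_def balanced_def potential_def)
qed

lemma breaker_wins_second:
  assumes "w \<in> V" "blocking_invariant {} {w}"
  shows "\<not> maker_wins V E k {} {} False"
proof
  assume "maker_wins V E k {} {} False"
  then show False
  proof cases
    case finished
    then show False using assms(1) by blast
  next
    case breaker_move
    then show False using breaker_wins[OF assms(2)] assms(1) by blast
  qed simp
qed

end

section \<open>The game on trees whose major vertices carry pendant leaves\<close>

lemma game_outcome_B:
  "\<not> maker_wins V E k {} {} True \<Longrightarrow> \<not> maker_wins V E k {} {} False \<Longrightarrow> game_outcome V E k = Outcome_B"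
  unfolding game_outcome_def Let_def by simp

lemma game_outcome_N:
  "maker_wins V E k {} {} True \<Longrightarrow> \<not> maker_wins V E k {} {} False \<Longrightarrow> game_outcome V E k = Outcome_N"
  unfolding game_outcome_def Let_def by simp

lemma game_outcome_M:
  "maker_wins V E k {} {} True \<Longrightarrow> maker_wins V E k {} {} False \<Longrightarrow> game_outcome V E k = Outcome_M"
  unfolding game_outcome_def Let_def by simp

locale exterior_pendant_graph = pendant_graph +
  assumes ter_pos: "\<And>v. major V E v \<Longrightarrow> ter V E v \<noteq> 0"
begin

lemma pendant_leaves_nonempty: "major V E v \<Longrightarrow> pendant_leaves V E v \<noteq> {}"
  using ter_pos ter_eq_card_pendant_leaves by force

definition star_pair :: "'a \<Rightarrow> 'a set" where
  "star_pair w = (if card (pendant_leaves V E w) = 1 then star V E w else pendant_leaves V E w)"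

definition base_pairs :: "'a set set" where
  "base_pairs = star_pair ` {w. major V E w \<and> card (pendant_leaves V E w) \<le> 2}"

lemma star_pair_subset_star: "star_pair w \<subseteq> star V E w"
  unfolding star_pair_def star_def by auto

lemma card_star_pair:
  assumes "major V E w" "card (pendant_leaves V E w) \<le> 2"
  shows "card (star_pair w) = 2"
proof -
  have "card (pendant_leaves V E w) \<noteq> 0"
    using pendant_leaves_nonempty[OF assms(1)] finite_pendant_leaves by simp
  then show ?thesis using assms card_star[OF assms(1)] unfolding star_pair_def by auto
qed

lemma base_pair_card: "P \<in> base_pairs \<Longrightarrow> P \<subseteq> V \<and> card P = 2"
  unfolding base_pairs_def using card_star_pair star_pair_subset_star star_subset_V by blast

lemma base_pairs_disjoint: "pairwise disjnt base_pairs"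
  unfolding base_pairs_def
proof (rule pairwise_imageI)
  fix w w' assume "w \<in> {w. major V E w \<and> card (pendant_leaves V E w) \<le> 2}"
    "w' \<in> {w. major V E w \<and> card (pendant_leaves V E w) \<le> 2}" "w \<noteq> w'"
  then have "star V E w \<inter> star V E w' = {}" using stars_disjoint by blast
  then show "disjnt (star_pair w) (star_pair w')"
    using star_pair_subset_star[of w] star_pair_subset_star[of w'] unfolding disjnt_def by blast
qed

lemma heavy_notin_base_pair:
  assumes x: "major V E x" "2 \<le> card (pendant_leaves V E x)" and P: "P \<in> base_pairs"
  shows "x \<notin> P"
proof
  assume "x \<in> P"
  obtain w where w: "major V E w" "card (pendant_leaves V E w) \<le> 2" "P = star_pair w"
    using P unfolding base_pairs_def by blast
  show False
  proof (cases "card (pendant_leaves V E w) = 1")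
    case True
    then have "x \<noteq> w" using x(2) by auto
    then show False using \<open>x \<in> P\<close> w(3) True major_notin_pendant_leaves[OF x(1)]
      unfolding star_pair_def star_def by simp
  next
    case False
    then show False using \<open>x \<in> P\<close> w(3) major_notin_pendant_leaves[OF x(1)]
      unfolding star_pair_def by simp
  qed
qed

lemma base_pair_disjoint_big_star:
  assumes v: "major V E v" "3 \<le> card (pendant_leaves V E v)" and P: "P \<in> base_pairs"
  shows "P \<inter> pendant_leaves V E v = {}"
proof -
  obtain w where w: "major V E w" "card (pendant_leaves V E w) \<le> 2" "P = star_pair w"
    using P unfolding base_pairs_def by blast
  then have "w \<noteq> v" using v(2) by auto
  then have "star V E w \<inter> star V E v = {}" using stars_disjoint w(1) v(1) by blast
  then show ?thesis using w(3) star_pair_subset_star[of w] unfolding star_def by blast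
qed

lemma star_cover_if_hits_base_pairs:
  assumes hits: "\<forall>P\<in>base_pairs. P \<inter> S \<noteq> {}"
    and big: "\<And>v. major V E v \<Longrightarrow> 3 \<le> card (pendant_leaves V E v) \<Longrightarrow>
      card (pendant_leaves V E v - S) \<le> 1"
  shows "star_cover V E S"
  unfolding star_cover_def
proof (intro allI impI)
  fix v assume v: "major V E v"
  let ?L = "pendant_leaves V E v"
  have fin: "finite ?L" by (rule finite_pendant_leaves)
  show "card (?L - S) \<le> 1 \<and> star V E v \<inter> S \<noteq> {}"
  proof (cases "card ?L \<le> 2")
    case True
    then have "star_pair v \<in> base_pairs" using v unfolding base_pairs_def by blast
    then have meets: "star_pair v \<inter> S \<noteq> {}" using hits by blast
    have "card (?L - S) \<le> 1"
    proof (cases "?L \<inter> S = {}")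
      case True
      then have "star_pair v \<noteq> ?L" using meets by auto
      then have "card ?L = 1" by (simp add: star_pair_def split: if_splits)
      then show ?thesis using card_mono[OF fin, of "?L - S"] by simp
    next
      case False
      have "card (?L - S) < card ?L" by (rule psubset_card_mono[OF fin]) (use False in blast)
      then show ?thesis using \<open>card ?L \<le> 2\<close> by simp
    qed
    then show ?thesis using meets star_pair_subset_star[of v] by blast
  next
    case False
    then have "card (?L - S) \<le> 1" using big v by simp
    moreover have "?L \<inter> S \<noteq> {}"
    proof
      assume "?L \<inter> S = {}"
      then have "?L - S = ?L" by blast
      then show False using \<open>card (?L - S) \<le> 1\<close> False by simp
    qed
    ultimately show ?thesis unfolding star_def by blast
  qed
qed

lemma big_star_mostly_claimed:
  assumes "card (pendant_leaves V E v) = 3" "a \<in> pendant_leaves V E v" "a \<in> S"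
    and "(pendant_leaves V E v - {a}) \<inter> S \<noteq> {}"
  shows "card (pendant_leaves V E v - S) \<le> 1"
proof -
  obtain b where b: "b \<in> pendant_leaves V E v" "b \<noteq> a" "b \<in> S" using assms(4) by blast
  have "pendant_leaves V E v - S \<subseteq> pendant_leaves V E v - {a, b}" using assms(3) b(3) by blast
  moreover have "card (pendant_leaves V E v - {a, b}) = 1"
    using assms(1,2) b(1,2) finite_pendant_leaves by (simp add: card_Diff_subset)
  ultimately show ?thesis using card_mono[of "pendant_leaves V E v - {a, b}"] finite_pendant_leaves
    by fastforce
qed

lemma remote_leaves_unique:
  assumes cover: "star_cover V E S" and hits: "\<forall>P\<in>base_pairs. P \<inter> S \<noteq> {}"
    and heavy: "\<And>v w. major V E v \<Longrightarrow> major V E w \<Longrightarrow> 2 \<le> card (pendant_leaves V E v) \<Longrightarrow>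
      2 \<le> card (pendant_leaves V E w) \<Longrightarrow> v \<notin> S \<Longrightarrow> w \<notin> S \<Longrightarrow> v = w"
    and u: "major V E u" "x \<in> pendant_leaves V E u" and w: "major V E w" "y \<in> pendant_leaves V E w"
    and outside: "{x, y, u, w} \<inter> S = {}"
  shows "x = y"
proof -
  have two: "2 \<le> card (pendant_leaves V E c)"
    if c: "major V E c" "l \<in> pendant_leaves V E c" "{l, c} \<inter> S = {}" for c l
  proof (rule ccontr)
    assume "\<not> 2 \<le> card (pendant_leaves V E c)"
    moreover have "card (pendant_leaves V E c) \<noteq> 0"
      using c(2) finite_pendant_leaves by (metis card_0_eq empty_iff)
    ultimately have one: "card (pendant_leaves V E c) = 1" by simp
    then have "pendant_leaves V E c = {l}" using c(2) by (metis card_1_singletonE singletonD)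
    moreover have "star_pair c \<in> base_pairs" using c(1) one unfolding base_pairs_def by auto
    ultimately show False using hits c(3) one unfolding star_pair_def star_def by auto
  qed
  have "u = w" using heavy[OF u(1) w(1) two[OF u] two[OF w]] outside by auto
  then show ?thesis using star_cover_twins[OF cover u(1) u(2)] w(2) outside by auto
qed

lemma resolving_if_hits_base_pairs:
  assumes "2 \<le> k" "\<forall>P\<in>base_pairs. P \<inter> S \<noteq> {}"
    and "\<And>v. major V E v \<Longrightarrow> 3 \<le> card (pendant_leaves V E v) \<Longrightarrow>
      card (pendant_leaves V E v - S) \<le> 1"
  shows "dist_k_resolving V E k S"
  using resolving_if_star_cover[OF assms(1) star_cover_if_hits_base_pairs[OF assms(2,3)]] .

lemma resolving_1_if_hits_base_pairs:
  assumes hits: "\<forall>P\<in>base_pairs. P \<inter> S \<noteq> {}"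
    and big: "\<And>v. major V E v \<Longrightarrow> 3 \<le> card (pendant_leaves V E v) \<Longrightarrow>
      card (pendant_leaves V E v - S) \<le> 1"
    and heavy: "\<And>v w. major V E v \<Longrightarrow> major V E w \<Longrightarrow> 2 \<le> card (pendant_leaves V E v) \<Longrightarrow>
      2 \<le> card (pendant_leaves V E w) \<Longrightarrow> v \<notin> S \<Longrightarrow> w \<notin> S \<Longrightarrow> v = w"
  shows "dist_k_resolving V E 1 S"
proof -
  have cover: "star_cover V E S" using star_cover_if_hits_base_pairs[OF hits big] .
  show ?thesis
    using resolving_1_if_star_cover[OF cover remote_leaves_unique[OF cover hits heavy]] .
qed

lemma maker_wins_by_pairs:
  assumes Q: "\<And>P. P \<in> Q \<Longrightarrow> P \<subseteq> V \<and> card P = 2" "pairwise disjnt Q"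
      "\<And>P P'. P \<in> Q \<Longrightarrow> P' \<in> base_pairs \<Longrightarrow> disjnt P P'"
    and B: "B \<subseteq> V"
    and resolves: "\<And>S. B \<subseteq> S \<Longrightarrow> \<forall>P\<in>base_pairs \<union> Q. P \<inter> S \<noteq> {} \<Longrightarrow>
      dist_k_resolving V E k S"
  shows "maker_wins V E k B {} False" "B = {} \<Longrightarrow> maker_wins V E k {} {} True"
    "B = {a} \<Longrightarrow> maker_wins V E k {} {} True"
proof -
  interpret pairing_strategy V E k "base_pairs \<union> Q" B
  proof
    show "finite V" by (rule finite_V)
    show "P \<subseteq> V \<and> card P = 2" if "P \<in> base_pairs \<union> Q" for P
      using that base_pair_card Q(1) by blast
    show "pairwise disjnt (base_pairs \<union> Q)"
      using base_pairs_disjoint Q(2,3) disjnt_sym unfolding pairwise_def by (metis Un_iff)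
  qed (rule resolves)
  show "maker_wins V E k B {} False" "B = {} \<Longrightarrow> maker_wins V E k {} {} True"
    "B = {a} \<Longrightarrow> maker_wins V E k {} {} True"
    using maker_wins_from_start[OF B] by simp_all
qed


lemma big_star_pair:
  assumes v: "major V E v" "card (pendant_leaves V E v) = 3" and a: "a \<in> pendant_leaves V E v"
  shows "pendant_leaves V E v - {a} \<subseteq> V" "card (pendant_leaves V E v - {a}) = 2"
    "\<And>P. P \<in> base_pairs \<Longrightarrow> disjnt (pendant_leaves V E v - {a}) P"
proof -
  show "pendant_leaves V E v - {a} \<subseteq> V" using pendant_leaves_subset_V by blast
  show "card (pendant_leaves V E v - {a}) = 2" using v(2) a finite_pendant_leaves by simp
  fix P assume "P \<in> base_pairs"
  then have "P \<inter> pendant_leaves V E v = {}" using base_pair_disjoint_big_star[OF v(1)] v(2) by simp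
  then show "disjnt (pendant_leaves V E v - {a}) P" unfolding disjnt_def by blast
qed

lemma heavy_pair:
  assumes x: "major V E x" "2 \<le> card (pendant_leaves V E x)"
    and y: "major V E y" "2 \<le> card (pendant_leaves V E y)" and "x \<noteq> y"
  shows "{x, y} \<subseteq> V" "card {x, y} = 2" "\<And>P. P \<in> base_pairs \<Longrightarrow> disjnt {x, y} P"
proof -
  show "{x, y} \<subseteq> V" using x(1) y(1) by (simp add: major_def)
  show "card {x, y} = 2" using \<open>x \<noteq> y\<close> by simp
  fix P assume "P \<in> base_pairs"
  then show "disjnt {x, y} P"
    using heavy_notin_base_pair[OF x] heavy_notin_base_pair[OF y] unfolding disjnt_def by blast
qed

lemma maker_wins_k2_small_stars:
  assumes k: "2 \<le> k" and small: "\<And>v. major V E v \<Longrightarrow> card (pendant_leaves V E v) \<le> 2"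
  shows "maker_wins V E k {} {} True" "maker_wins V E k {} {} False"
proof -
  have resolves: "dist_k_resolving V E k S" if "\<forall>P\<in>base_pairs \<union> {}. P \<inter> S \<noteq> {}" for S
  proof (rule resolving_if_hits_base_pairs[OF k])
    show "\<forall>P\<in>base_pairs. P \<inter> S \<noteq> {}" using that by simp
    show "card (pendant_leaves V E v - S) \<le> 1"
      if "major V E v" "3 \<le> card (pendant_leaves V E v)" for v
      using small[OF that(1)] that(2) by simp
  qed
  show "maker_wins V E k {} {} True" "maker_wins V E k {} {} False"
    using maker_wins_by_pairs[where Q = "{}" and B = "{}"] resolves by simp_all
qed

lemma maker_wins_first_k2_one_big_star:
  assumes k: "2 \<le> k" and v: "major V E v" "card (pendant_leaves V E v) = 3"
    and unique: "\<And>w. major V E w \<Longrightarrow> 3 \<le> card (pendant_leaves V E w) \<Longrightarrow> w = v"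
  shows "maker_wins V E k {} {} True"
proof -
  obtain a where a: "a \<in> pendant_leaves V E v" using pendant_leaves_nonempty[OF v(1)] by blast
  note pair = big_star_pair[OF v a]
  have resolves: "dist_k_resolving V E k S"
    if aS: "{a} \<subseteq> S" and hits: "\<forall>P\<in>base_pairs \<union> {pendant_leaves V E v - {a}}. P \<inter> S \<noteq> {}"
    for S
  proof (rule resolving_if_hits_base_pairs[OF k])
    show "\<forall>P\<in>base_pairs. P \<inter> S \<noteq> {}" using hits by simp
    show "card (pendant_leaves V E w - S) \<le> 1"
      if "major V E w" "3 \<le> card (pendant_leaves V E w)" for w
      using unique[OF that] big_star_mostly_claimed[OF v(2) a] aS hits by simp
  qed
  show ?thesis
  proof (rule maker_wins_by_pairs(3)[where Q = "{pendant_leaves V E v - {a}}" and B = "{a}"])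
    show "{a} \<subseteq> V" using a pendant_leaves_subset_V by blast
  qed (use pair resolves in auto)
qed

lemma maker_wins_1_two_doubles:
  assumes small: "\<And>v. major V E v \<Longrightarrow> card (pendant_leaves V E v) \<le> 2"
    and doubles: "{v. major V E v \<and> card (pendant_leaves V E v) = 2} = {w1, w2}" and "w1 \<noteq> w2"
  shows "maker_wins V E 1 {} {} True" "maker_wins V E 1 {} {} False"
proof -
  have "w1 \<in> {v. major V E v \<and> card (pendant_leaves V E v) = 2}"
    "w2 \<in> {v. major V E v \<and> card (pendant_leaves V E v) = 2}" using doubles by simp_all
  then have w: "major V E w1" "2 \<le> card (pendant_leaves V E w1)"
    "major V E w2" "2 \<le> card (pendant_leaves V E w2)" by simp_all
  note pair = heavy_pair[OF w \<open>w1 \<noteq> w2\<close>]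
  have resolves: "dist_k_resolving V E 1 S" if hits: "\<forall>P\<in>base_pairs \<union> {{w1, w2}}. P \<inter> S \<noteq> {}"
    for S
  proof (rule resolving_1_if_hits_base_pairs)
    show "\<forall>P\<in>base_pairs. P \<inter> S \<noteq> {}" using hits by simp
    show "card (pendant_leaves V E v - S) \<le> 1"
      if "major V E v" "3 \<le> card (pendant_leaves V E v)" for v
      using small[OF that(1)] that(2) by simp
    show "v = w" if "major V E v" "major V E w" "2 \<le> card (pendant_leaves V E v)"
      "2 \<le> card (pendant_leaves V E w)" "v \<notin> S" "w \<notin> S" for v w
    proof -
      have "{v, w} \<subseteq> {u. major V E u \<and> card (pendant_leaves V E u) = 2}"
        using small[OF that(1)] small[OF that(2)] that(1-4) by auto
      then have "v \<in> {w1, w2}" "w \<in> {w1, w2}" using doubles by auto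
      moreover have "w1 \<in> S \<or> w2 \<in> S" using hits by auto
      ultimately show ?thesis using that(5,6) by auto
    qed
  qed
  show "maker_wins V E 1 {} {} True"
    by (rule maker_wins_by_pairs(2)[where Q = "{{w1, w2}}" and B = "{}"]) (use pair resolves in auto)
  show "maker_wins V E 1 {} {} False"
    by (rule maker_wins_by_pairs(1)[where Q = "{{w1, w2}}" and B = "{}"]) (use pair resolves in auto)
qed

lemma maker_wins_first_1_three_doubles:
  assumes small: "\<And>v. major V E v \<Longrightarrow> card (pendant_leaves V E v) \<le> 2"
    and doubles: "{v. major V E v \<and> card (pendant_leaves V E v) = 2} = {w1, w2, w3}" and "w2 \<noteq> w3"
  shows "maker_wins V E 1 {} {} True"
proof -
  have "w1 \<in> {v. major V E v \<and> card (pendant_leaves V E v) = 2}"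
    "w2 \<in> {v. major V E v \<and> card (pendant_leaves V E v) = 2}"
    "w3 \<in> {v. major V E v \<and> card (pendant_leaves V E v) = 2}" using doubles by simp_all
  then have "major V E w1" and w: "major V E w2" "2 \<le> card (pendant_leaves V E w2)"
    "major V E w3" "2 \<le> card (pendant_leaves V E w3)" by simp_all
  note pair = heavy_pair[OF w \<open>w2 \<noteq> w3\<close>]
  have resolves: "dist_k_resolving V E 1 S"
    if w1S: "{w1} \<subseteq> S" and hits: "\<forall>P\<in>base_pairs \<union> {{w2, w3}}. P \<inter> S \<noteq> {}" for S
  proof (rule resolving_1_if_hits_base_pairs)
    show "\<forall>P\<in>base_pairs. P \<inter> S \<noteq> {}" using hits by simp
    show "card (pendant_leaves V E v - S) \<le> 1"
      if "major V E v" "3 \<le> card (pendant_leaves V E v)" for v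
      using small[OF that(1)] that(2) by simp
    show "v = w" if vw: "major V E v" "major V E w" "2 \<le> card (pendant_leaves V E v)"
      "2 \<le> card (pendant_leaves V E w)" "v \<notin> S" "w \<notin> S" for v w
    proof -
      have "{v, w} \<subseteq> {u. major V E u \<and> card (pendant_leaves V E u) = 2}"
        using small[OF vw(1)] small[OF vw(2)] vw(1-4) by auto
      then have "v \<in> {w1, w2, w3}" "w \<in> {w1, w2, w3}" using doubles by auto
      moreover have "w1 \<in> S" "w2 \<in> S \<or> w3 \<in> S" using w1S hits by auto
      ultimately show ?thesis using vw(5,6) by auto
    qed
  qed
  show ?thesis
  proof (rule maker_wins_by_pairs(3)[where Q = "{{w2, w3}}" and B = "{w1}"])
    show "{w1} \<subseteq> V" using \<open>major V E w1\<close> by (simp add: major_def)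
  qed (use pair resolves in auto)
qed

lemma big_star_and_double_pairs:
  assumes v: "major V E v" "card (pendant_leaves V E v) = 3" and a: "a \<in> pendant_leaves V E v"
    and D: "D \<subseteq> {w. major V E w \<and> card (pendant_leaves V E w) = 2}"
    and D_unique: "\<And>d d'. d \<in> D \<Longrightarrow> d' \<in> D \<Longrightarrow> d = d'"
  defines "Q \<equiv> insert (pendant_leaves V E v - {a}) ((\<lambda>d. {v, d}) ` D)"
  shows "\<And>P. P \<in> Q \<Longrightarrow> P \<subseteq> V \<and> card P = 2" "pairwise disjnt Q"
    "\<And>P P'. P \<in> Q \<Longrightarrow> P' \<in> base_pairs \<Longrightarrow> disjnt P P'"
proof -
  have heavy_v: "2 \<le> card (pendant_leaves V E v)" using v(2) by simp
  have pair: "{v, d} \<subseteq> V" "card {v, d} = 2" "\<And>P. P \<in> base_pairs \<Longrightarrow> disjnt {v, d} P"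
    if "d \<in> D" for d
  proof -
    have d: "major V E d" "2 \<le> card (pendant_leaves V E d)" "v \<noteq> d" using that D v(2) by auto
    show "{v, d} \<subseteq> V" "card {v, d} = 2" "\<And>P. P \<in> base_pairs \<Longrightarrow> disjnt {v, d} P"
      using heavy_pair[OF v(1) heavy_v d] by simp_all
  qed
  show "P \<subseteq> V \<and> card P = 2" if "P \<in> Q" for P
    using that pair big_star_pair[OF v a] unfolding Q_def by auto
  show "disjnt P P'" if "P \<in> Q" "P' \<in> base_pairs" for P P'
    using that pair big_star_pair[OF v a] unfolding Q_def by auto
  have "disjnt (pendant_leaves V E v - {a}) {v, d}" if "d \<in> D" for d
    using that D major_notin_pendant_leaves v(1) unfolding disjnt_def by blast
  then show "pairwise disjnt Q" using D_unique unfolding pairwise_def Q_def by (auto simp: disjnt_sym)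
qed

lemma maker_wins_first_1_one_big_star:
  assumes v: "major V E v" "card (pendant_leaves V E v) = 3"
    and unique: "\<And>w. major V E w \<Longrightarrow> 3 \<le> card (pendant_leaves V E w) \<Longrightarrow> w = v"
    and doubles: "card {w. major V E w \<and> card (pendant_leaves V E w) = 2} \<le> 1"
  shows "maker_wins V E 1 {} {} True"
proof -
  define D where "D = {w. major V E w \<and> card (pendant_leaves V E w) = 2}"
  have "finite D" unfolding D_def using finite_V by (auto intro: finite_subset simp: major_def)
  then have D_unique: "d = d'" if "d \<in> D" "d' \<in> D" for d d'
    using doubles that card_le_Suc0_iff_eq unfolding D_def by auto
  obtain a where a: "a \<in> pendant_leaves V E v" using pendant_leaves_nonempty[OF v(1)] by blast
  let ?Q = "insert (pendant_leaves V E v - {a}) ((\<lambda>d. {v, d}) ` D)"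
  have "D \<subseteq> {w. major V E w \<and> card (pendant_leaves V E w) = 2}" unfolding D_def ..
  note pairs = big_star_and_double_pairs[OF v a this D_unique]
  have resolves: "dist_k_resolving V E 1 S"
    if aS: "{a} \<subseteq> S" and hits: "\<forall>P\<in>base_pairs \<union> ?Q. P \<inter> S \<noteq> {}" for S
  proof (rule resolving_1_if_hits_base_pairs)
    show "\<forall>P\<in>base_pairs. P \<inter> S \<noteq> {}" using hits by simp
    show "card (pendant_leaves V E w - S) \<le> 1"
      if "major V E w" "3 \<le> card (pendant_leaves V E w)" for w
      using unique[OF that] big_star_mostly_claimed[OF v(2) a] aS hits by simp
    have heavy: "u = v \<or> u \<in> D" if "major V E u" "2 \<le> card (pendant_leaves V E u)" for u
      using unique[OF that(1)] that unfolding D_def by fastforce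
    have "v \<in> S" if "d \<in> D" "d \<notin> S" for d
    proof -
      have "{v, d} \<in> base_pairs \<union> ?Q" using that(1) by blast
      then have "{v, d} \<inter> S \<noteq> {}" using hits by blast
      then show ?thesis using that(2) by blast
    qed
    then show "u = w" if "major V E u" "major V E w" "2 \<le> card (pendant_leaves V E u)"
      "2 \<le> card (pendant_leaves V E w)" "u \<notin> S" "w \<notin> S" for u w
      using heavy[OF that(1,3)] heavy[OF that(2,4)] D_unique that(5,6) by metis
  qed
  show ?thesis
  proof (rule maker_wins_by_pairs(3)[where Q = ?Q and B = "{a}"])
    show "{a} \<subseteq> V" using a pendant_leaves_subset_V by blast
  qed (use pairs resolves in auto)
qed

lemma breaker_wins_if_four_leaves:
  assumes v: "major V E v" "4 \<le> card (pendant_leaves V E v)"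
  shows "\<not> maker_wins V E k {} {} True" "\<not> maker_wins V E k {} {} False"
proof -
  interpret triple_blocking V E k "pendant_leaves V E v" "{}" 0
  proof
    fix Mk assume Mk: "Mk \<subseteq> V" "2 * card (Mk \<inter> pendant_leaves V E v) \<le> card (pendant_leaves V E v) + 1"
    have "card (pendant_leaves V E v - Mk) = card (pendant_leaves V E v) - card (Mk \<inter> pendant_leaves V E v)"
      using finite_pendant_leaves by (simp add: card_Diff_subset_Int Int_commute)
    then have "2 \<le> card (pendant_leaves V E v - Mk)" using Mk(2) v(2) by linarith
    then show "\<not> dist_k_resolving V E k Mk" using not_resolving_if_two_free_leaves Mk(1) v(1) by blast
  qed (auto simp: finite_V pendant_leaves_subset_V)
  show "\<not> maker_wins V E k {} {} True" by (rule breaker_wins_first) simp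
  have "v \<in> V" using v(1) by (simp add: major_def)
  moreover have "blocking_invariant {} {v}" using \<open>v \<in> V\<close> by (simp add: blocking_invariant_def balanced_def)
  ultimately show "\<not> maker_wins V E k {} {} False" by (rule breaker_wins_second)
qed

lemma breaker_wins_second_if_three_leaves:
  assumes v: "major V E v" "card (pendant_leaves V E v) = 3"
  shows "\<not> maker_wins V E k {} {} False"
proof -
  interpret triple_blocking V E k "{}" "{pendant_leaves V E v}" 1
  proof
    fix Mk assume Mk: "Mk \<subseteq> V" and "1 \<le> card {U \<in> {pendant_leaves V E v}. card (Mk \<inter> U) \<le> 1}"
    then have "{U \<in> {pendant_leaves V E v}. card (Mk \<inter> U) \<le> 1} \<noteq> {}"
      by (metis card.empty not_one_le_zero)
    then have "card (Mk \<inter> pendant_leaves V E v) \<le> 1" by blast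
    then have "2 \<le> card (pendant_leaves V E v - Mk)"
      using card_free_ge_2[OF finite_pendant_leaves] v(2) by simp
    then show "\<not> dist_k_resolving V E k Mk" using not_resolving_if_two_free_leaves Mk v(1) by blast
  qed (use finite_V pendant_leaves_subset_V v(2) in auto)
  obtain w where w: "w \<in> pendant_leaves V E v" using pendant_leaves_nonempty[OF v(1)] by blast
  then have "secured {} {w} = {pendant_leaves V E v}" by (auto simp: secured_def)
  then have "blocking_invariant {} {w}"
    using w pendant_leaves_subset_V unfolding blocking_invariant_def balanced_def potential_def by auto
  then show ?thesis using breaker_wins_second w pendant_leaves_subset_V by blast
qed

lemma breaker_wins_first_if_two_big_stars:
  assumes v: "major V E v" "card (pendant_leaves V E v) = 3"
    and w: "major V E w" "card (pendant_leaves V E w) = 3" and "v \<noteq> w"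
  shows "\<not> maker_wins V E k {} {} True"
proof -
  have disj: "pendant_leaves V E v \<inter> pendant_leaves V E w = {}"
    using pendant_leaves_disjoint \<open>v \<noteq> w\<close> by blast
  then have distinct: "pendant_leaves V E v \<noteq> pendant_leaves V E w"
    using pendant_leaves_nonempty[OF v(1)] by blast
  interpret triple_blocking V E k "{}" "{pendant_leaves V E v, pendant_leaves V E w}" 1
  proof
    show "pairwise disjnt {pendant_leaves V E v, pendant_leaves V E w}"
      using disj by (simp add: pairwise_insert disjnt_def Int_commute)
    fix Mk assume Mk: "Mk \<subseteq> V"
      and "1 \<le> card {U \<in> {pendant_leaves V E v, pendant_leaves V E w}. card (Mk \<inter> U) \<le> 1}"
    then have "{U \<in> {pendant_leaves V E v, pendant_leaves V E w}. card (Mk \<inter> U) \<le> 1} \<noteq> {}"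
      by (metis card.empty not_one_le_zero)
    then obtain u where u: "u = v \<or> u = w" "card (Mk \<inter> pendant_leaves V E u) \<le> 1" by blast
    then have "major V E u" "2 \<le> card (pendant_leaves V E u - Mk)"
      using card_free_ge_2[OF finite_pendant_leaves] v w by auto
    then show "\<not> dist_k_resolving V E k Mk" using not_resolving_if_two_free_leaves Mk by blast
  qed (use finite_V pendant_leaves_subset_V v(2) w(2) in auto)
  show ?thesis by (rule breaker_wins_first) (simp add: distinct)
qed

lemma inj_on_star: "inj_on (star V E) {v. major V E v}"
proof (rule inj_onI)
  fix v w assume "v \<in> {v. major V E v}" "w \<in> {v. major V E v}" "star V E v = star V E w"
  then have "major V E v" "v \<in> star V E w" unfolding star_def by auto
  then show "v = w" using major_notin_pendant_leaves unfolding star_def by blast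
qed

lemma double_stars:
  assumes D: "D \<subseteq> {w. major V E w \<and> card (pendant_leaves V E w) = 2}"
  shows "\<And>U. U \<in> star V E ` D \<Longrightarrow> U \<subseteq> V \<and> card U = 3" "pairwise disjnt (star V E ` D)"
    "card (star V E ` D) = card D"
proof -
  show "U \<subseteq> V \<and> card U = 3" if "U \<in> star V E ` D" for U
    using that D star_subset_V card_star by auto
  show "pairwise disjnt (star V E ` D)"
    by (rule pairwise_imageI) (use D stars_disjoint in \<open>auto simp: disjnt_def\<close>)
  show "card (star V E ` D) = card D"
    using card_image inj_on_subset[OF inj_on_star] D by blast
qed

lemma open_double_star:
  assumes D: "D \<subseteq> {w. major V E w \<and> card (pendant_leaves V E w) = 2}"
    and U: "U \<in> star V E ` D" "card (Mk \<inter> U) \<le> 1"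
  obtains d where "d \<in> D" "U = star V E d" "2 \<le> card (star V E d - Mk)"
proof -
  obtain d where d: "d \<in> D" "U = star V E d" using U(1) by blast
  have "finite U" "card U = 3" using double_stars(1)[OF D U(1)] finite_V finite_subset by auto
  then have "2 \<le> card (U - Mk)" using card_free_ge_2[of U Mk] U(2) by simp
  then show ?thesis using that d by blast
qed

lemma breaker_wins_1_doubles:
  assumes D: "D \<subseteq> {w. major V E w \<and> card (pendant_leaves V E w) = 2}"
  shows "4 \<le> card D \<Longrightarrow> \<not> maker_wins V E 1 {} {} True"
    "3 \<le> card D \<Longrightarrow> \<not> maker_wins V E 1 {} {} False"
proof -
  note stars = double_stars[OF D]
  interpret triple_blocking V E 1 "{}" "star V E ` D" 2
  proof
    fix Mk assume Mk: "Mk \<subseteq> V" and "2 \<le> card {U \<in> star V E ` D. card (Mk \<inter> U) \<le> 1}"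
    then obtain U1 U2 where U: "U1 \<in> star V E ` D" "card (Mk \<inter> U1) \<le> 1"
      "U2 \<in> star V E ` D" "card (Mk \<inter> U2) \<le> 1" "U1 \<noteq> U2"
      by (elim card_ge_2_obtains) blast
    obtain d1 where d1: "d1 \<in> D" "U1 = star V E d1" "2 \<le> card (star V E d1 - Mk)"
      using open_double_star[OF D U(1,2)] .
    obtain d2 where d2: "d2 \<in> D" "U2 = star V E d2" "2 \<le> card (star V E d2 - Mk)"
      using open_double_star[OF D U(3,4)] .
    have "d1 \<noteq> d2" using d1(2) d2(2) U(5) by blast
    then show "\<not> dist_k_resolving V E 1 Mk"
      using not_resolving_1_if_two_open_stars[OF Mk _ _ _ d1(3) d2(3)] d1(1) d2(1) D by blast
  qed (use finite_V stars in auto)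
  show "4 \<le> card D \<Longrightarrow> \<not> maker_wins V E 1 {} {} True"
    by (rule breaker_wins_first) (simp add: stars(3))
  show "\<not> maker_wins V E 1 {} {} False" if three: "3 \<le> card D"
  proof -
    have "D \<noteq> {}" using three by auto
    then obtain w where w: "w \<in> D" by blast
    then have wV: "w \<in> V" using D by (auto simp: major_def)
    have "star V E w \<in> secured {} {w}" using w unfolding secured_def star_def by auto
    then have "0 < card (secured {} {w})" using finite_secured card_gt_0_iff by blast
    then have "1 \<le> card (secured {} {w})" by simp
    moreover have "untouched {} {w} = star V E ` D - {star V E w}"
      using w D stars_disjoint unfolding untouched_def star_def by auto
    then have "2 \<le> card (untouched {} {w})"
      using three w stars(3) finite_triples by (simp add: card_Diff_singleton)
    ultimately have "blocking_invariant {} {w}"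
      using wV unfolding blocking_invariant_def balanced_def potential_def by simp
    then show ?thesis using breaker_wins_second wV by blast
  qed
qed

lemma breaker_wins_first_1_big_star_and_doubles:
  assumes v: "major V E v" "card (pendant_leaves V E v) = 3"
    and D: "D \<subseteq> {w. major V E w \<and> card (pendant_leaves V E w) = 2}" and "2 \<le> card D"
  shows "\<not> maker_wins V E 1 {} {} True"
proof -
  note stars = double_stars[OF D]
  have card_star_v: "card (star V E v) = 4" using card_star[OF v(1)] v(2) by simp
  interpret triple_blocking V E 1 "star V E v" "star V E ` D" 1
  proof
    show "star V E v \<subseteq> V" using star_subset_V[OF v(1)] .
    show "U \<inter> star V E v = {}" if "U \<in> star V E ` D" for U
      using that D v stars_disjoint by fastforce
    fix Mk assume Mk: "Mk \<subseteq> V" and U0: "2 * card (Mk \<inter> star V E v) \<le> card (star V E v) + 1"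
      and "1 \<le> card {U \<in> star V E ` D. card (Mk \<inter> U) \<le> 1}"
    then have "{U \<in> star V E ` D. card (Mk \<inter> U) \<le> 1} \<noteq> {}"
      by (metis card.empty not_one_le_zero)
    then obtain U where "U \<in> star V E ` D" "card (Mk \<inter> U) \<le> 1" by blast
    then obtain d where d: "d \<in> D" "2 \<le> card (star V E d - Mk)"
      using open_double_star[OF D] by metis
    have "2 \<le> card (star V E v - Mk)"
      using card_free_ge_2[of "star V E v" Mk] U0 card_star_v finite_V star_subset_V[OF v(1)]
        finite_subset by fastforce
    moreover have "v \<noteq> d" using d(1) D v(2) by auto
    ultimately show "\<not> dist_k_resolving V E 1 Mk"
      using not_resolving_1_if_two_open_stars[OF Mk v(1) _ _ _ d(2)] d(1) D by blast
  qed (use finite_V stars in auto)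
  show ?thesis by (rule breaker_wins_first) (use \<open>2 \<le> card D\<close> stars(3) in simp)
qed


lemma M_i_eq: "M_i V E i = {v. major V E v \<and> card (pendant_leaves V E v) = i}"
  unfolding M_i_def ext_major_def using ter_eq_card_pendant_leaves ter_pos by auto

lemma M_ge4_eq: "M_ge4 V E = {v. major V E v \<and> 4 \<le> card (pendant_leaves V E v)}"
  unfolding M_ge4_def ext_major_def using ter_eq_card_pendant_leaves ter_pos by auto

lemma small_stars:
  assumes "M_ge4 V E = {}" "M_i V E 3 = {}" "major V E v"
  shows "card (pendant_leaves V E v) \<le> 2"
  using assms unfolding M_ge4_eq M_i_eq by fastforce

lemma unique_big_star:
  assumes "M_ge4 V E = {}" "M_i V E 3 = {v}" "major V E w" "3 \<le> card (pendant_leaves V E w)"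
  shows "w = v"
proof -
  have "card (pendant_leaves V E w) = 3" using assms(1,3,4) unfolding M_ge4_eq by fastforce
  then show ?thesis using assms(2,3) unfolding M_i_eq by blast
qed

lemma big_star_of_M3:
  assumes "M_i V E 3 = {v}"
  shows "major V E v" "card (pendant_leaves V E v) = 3"
  using assms unfolding M_i_eq by blast+

lemma doubles_eq_M2: "{w. major V E w \<and> card (pendant_leaves V E w) = 2} = M_i V E 2"
  unfolding M_i_eq ..

lemma outcome_B:
  assumes "(card (M_ge4 V E) \<ge> 1 \<or> card (M_i V E 3) \<ge> 2)
    \<or> (M_ge4 V E = {} \<and> card (M_i V E 3) = 1 \<and> card (M_i V E 2) \<ge> 2 \<and> k = 1)
    \<or> (M_ge4 V E = {} \<and> M_i V E 3 = {} \<and> card (M_i V E 2) \<ge> 4 \<and> k = 1)"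
  shows "game_outcome V E k = Outcome_B"
  using assms
proof (elim disjE conjE)
  assume "card (M_ge4 V E) \<ge> 1"
  then obtain v where "major V E v" "4 \<le> card (pendant_leaves V E v)"
    unfolding M_ge4_eq by (metis (no_types, lifting) card.empty empty_Collect_eq not_one_le_zero)
  then show ?thesis using breaker_wins_if_four_leaves game_outcome_B by metis
next
  assume "card (M_i V E 3) \<ge> 2"
  then obtain v w where "v \<in> M_i V E 3" "w \<in> M_i V E 3" "v \<noteq> w" by (rule card_ge_2_obtains)
  then show ?thesis
    using breaker_wins_first_if_two_big_stars breaker_wins_second_if_three_leaves game_outcome_B
    unfolding M_i_eq by blast
next
  assume "card (M_i V E 3) = 1" "card (M_i V E 2) \<ge> 2" "k = 1"
  then obtain v where "M_i V E 3 = {v}" by (auto simp: card_Suc_eq)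
  then show ?thesis
    using big_star_of_M3 breaker_wins_first_1_big_star_and_doubles[of v "M_i V E 2"]
      breaker_wins_second_if_three_leaves game_outcome_B \<open>card (M_i V E 2) \<ge> 2\<close> \<open>k = 1\<close>
    unfolding doubles_eq_M2 by blast
next
  assume "card (M_i V E 2) \<ge> 4" "k = 1"
  then show ?thesis
    using breaker_wins_1_doubles[of "M_i V E 2"] game_outcome_B unfolding doubles_eq_M2 by simp
qed

lemma outcome_N:
  assumes "(M_ge4 V E = {} \<and> card (M_i V E 3) = 1 \<and> card (M_i V E 2) \<in> {0, 1} \<and> k = 1)
    \<or> (M_ge4 V E = {} \<and> card (M_i V E 3) = 1 \<and> k \<ge> 2)
    \<or> (M_ge4 V E = {} \<and> M_i V E 3 = {} \<and> card (M_i V E 2) = 3 \<and> k = 1)"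
  shows "game_outcome V E k = Outcome_N"
  using assms
proof (elim disjE conjE)
  assume M4: "M_ge4 V E = {}" and "card (M_i V E 3) = 1" "card (M_i V E 2) \<in> {0, 1}" "k = 1"
  then obtain v where M3: "M_i V E 3 = {v}" by (auto simp: card_Suc_eq)
  have "maker_wins V E 1 {} {} True"
    using maker_wins_first_1_one_big_star[OF big_star_of_M3[OF M3] unique_big_star[OF M4 M3]]
      \<open>card (M_i V E 2) \<in> {0, 1}\<close> unfolding doubles_eq_M2 by auto
  then show ?thesis
    using breaker_wins_second_if_three_leaves[OF big_star_of_M3[OF M3]] game_outcome_N \<open>k = 1\<close>
    by blast
next
  assume M4: "M_ge4 V E = {}" and "card (M_i V E 3) = 1" "k \<ge> 2"
  then obtain v where M3: "M_i V E 3 = {v}" by (auto simp: card_Suc_eq)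
  show ?thesis
    using maker_wins_first_k2_one_big_star[OF \<open>k \<ge> 2\<close> big_star_of_M3[OF M3] unique_big_star[OF M4 M3]]
      breaker_wins_second_if_three_leaves[OF big_star_of_M3[OF M3]] game_outcome_N by blast
next
  assume M4: "M_ge4 V E = {}" and M3: "M_i V E 3 = {}" and "card (M_i V E 2) = 3" "k = 1"
  then obtain w1 w2 w3 where M2: "M_i V E 2 = {w1, w2, w3}" "w2 \<noteq> w3"
    by (auto simp: card_3_iff)
  have "maker_wins V E 1 {} {} True"
    using maker_wins_first_1_three_doubles[OF small_stars[OF M4 M3]] M2 unfolding doubles_eq_M2 by blast
  moreover have "\<not> maker_wins V E 1 {} {} False"
    using breaker_wins_1_doubles(2)[of "M_i V E 2"] \<open>card (M_i V E 2) = 3\<close>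
    unfolding doubles_eq_M2 by simp
  ultimately show ?thesis using game_outcome_N \<open>k = 1\<close> by blast
qed

lemma outcome_M:
  assumes "(M_ge4 V E = {} \<and> M_i V E 3 = {} \<and> card (M_i V E 2) = 2 \<and> k = 1)
    \<or> (M_ge4 V E = {} \<and> M_i V E 3 = {} \<and> M_i V E 2 \<noteq> {} \<and> k \<ge> 2)"
  shows "game_outcome V E k = Outcome_M"
  using assms
proof (elim disjE conjE)
  assume M4: "M_ge4 V E = {}" and M3: "M_i V E 3 = {}" and "card (M_i V E 2) = 2" "k = 1"
  then obtain w1 w2 where M2: "M_i V E 2 = {w1, w2}" "w1 \<noteq> w2" by (auto simp: card_2_iff)
  then show ?thesis
    using maker_wins_1_two_doubles[OF small_stars[OF M4 M3]] game_outcome_M \<open>k = 1\<close>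
    unfolding doubles_eq_M2 by blast
next
  assume M4: "M_ge4 V E = {}" and M3: "M_i V E 3 = {}" and "k \<ge> 2"
  then show ?thesis
    using maker_wins_k2_small_stars[OF \<open>k \<ge> 2\<close> small_stars[OF M4 M3]] game_outcome_M by blast
qed

end

theorem theorem3p9:
  fixes V :: "'a set" and E :: "'a \<Rightarrow> 'a \<Rightarrow> bool" and k :: nat
  assumes "k \<ge> 1"
    and "tree V E"
    and "\<not> is_path_graph V E"
    and "\<forall>v\<in>V. degree V E v \<noteq> 2"
    and "\<forall>v. major V E v \<longrightarrow> ter V E v \<noteq> 0"
  shows "((card (M_ge4 V E) \<ge> 1 \<or> card (M_i V E 3) \<ge> 2)
           \<or> (M_ge4 V E = {} \<and> card (M_i V E 3) = 1 \<and> card (M_i V E 2) \<ge> 2 \<and> k = 1)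
           \<or> (M_ge4 V E = {} \<and> M_i V E 3 = {} \<and> card (M_i V E 2) \<ge> 4 \<and> k = 1)
          \<longrightarrow> game_outcome V E k = Outcome_B)
       \<and> ((M_ge4 V E = {} \<and> card (M_i V E 3) = 1 \<and> card (M_i V E 2) \<in> {0, 1} \<and> k = 1)
           \<or> (M_ge4 V E = {} \<and> card (M_i V E 3) = 1 \<and> k \<ge> 2)
           \<or> (M_ge4 V E = {} \<and> M_i V E 3 = {} \<and> card (M_i V E 2) = 3 \<and> k = 1)
          \<longrightarrow> game_outcome V E k = Outcome_N)
       \<and> ((M_ge4 V E = {} \<and> M_i V E 3 = {} \<and> card (M_i V E 2) = 2 \<and> k = 1)
           \<or> (M_ge4 V E = {} \<and> M_i V E 3 = {} \<and> M_i V E 2 \<noteq> {} \<and> k \<ge> 2)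
          \<longrightarrow> game_outcome V E k = Outcome_M)"
proof -
  interpret exterior_pendant_graph V E
    using assms(2-5) by unfold_locales (auto simp: tree_def)
  show ?thesis using outcome_B outcome_N outcome_M by blast
qed

end
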